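(* Let $d\in\{2,3\}$, $R>0$, $0<\overline{\epsilon}<\epsilon<R$ and $\delta>0$. There exists $c>0$ such that for all $\mathbf{a}=(\underline{a},\overline{a})\in\mathcal{A}_{R,\overline{\epsilon}}\times\mathcal{A}_{R,\overline{\epsilon}}$, $\Phi_\delta(\mathbf{a})\ge c$.
   Context: For $0<r<r'$, $\mathcal{A}(r,r')=\{z\in\mathbb{R}^d: r<\|z\|<r'\}$ (Euclidean norm), and $\mathcal{A}_{R,\eta}=\mathcal{A}(R-\eta,R+\eta)$. For $\mathbf{a}=(\underline{a},\overline{a})\in(\mathbb{R}^d)^2$, $\Phi_\delta(\mathbf{a})$ is the probability that a $d$-dimensional Brownian bridge $(W_s)_{s\in[0,\delta]}$ with $W_0=\underline{a}$ and $W_\delta=\overline{a}$ satisfies $W_s\in\mathcal{A}_{R,\epsilon}$ for all $s\in[0,\delta]$. *)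

theory Defs
  imports "HOL-Probability.Probability"
begin

definition annulus :: "real \<Rightarrow> real \<Rightarrow> ('a::real_normed_vector) set" where
  "annulus r r' = {z. r < norm z \<and> norm z < r'}"

definition annulusR :: "real \<Rightarrow> real \<Rightarrow> ('a::real_normed_vector) set" where
  "annulusR R \<eta> = annulus (R - \<eta>) (R + \<eta>)"

definition std_brownian_motion :: "'w measure \<Rightarrow> (real \<Rightarrow> 'w \<Rightarrow> real ^ 'd) \<Rightarrow> bool" where
  "std_brownian_motion M B \<longleftrightarrow>
     prob_space M \<and>
     (\<forall>t. B t \<in> borel_measurable M) \<and>
     (\<forall>\<omega>\<in>space M. B 0 \<omega> = 0) \<and>
     (\<forall>\<omega>\<in>space M. continuous_on {0..} (\<lambda>t. B t \<omega>)) \<and>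
     (\<forall>(n::nat) (t::nat \<Rightarrow> real). 0 \<le> t 0 \<and> (\<forall>i<n. t i < t (Suc i)) \<longrightarrow>
        prob_space.indep_vars M (\<lambda>_. borel) (\<lambda>i \<omega>. B (t (Suc i)) \<omega> - B (t i) \<omega>) {..<n}) \<and>
     (\<forall>s t. 0 \<le> s \<and> s < t \<longrightarrow>
        prob_space.indep_vars M (\<lambda>_. borel) (\<lambda>i \<omega>. (B t \<omega> - B s \<omega>) $ i) UNIV \<and>
        (\<forall>i. distributed M lborel (\<lambda>\<omega>. (B t \<omega> - B s \<omega>) $ i) (normal_density 0 (sqrt (t - s)))))"

definition brownian_bridge ::
  "real \<Rightarrow> real ^ 'd \<Rightarrow> real ^ 'd \<Rightarrow> (real \<Rightarrow> 'w \<Rightarrow> real ^ 'd) \<Rightarrow> real \<Rightarrow> 'w \<Rightarrow> real ^ 'd" where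
  "brownian_bridge \<delta> a0 a1 B s \<omega> =
     a0 + (s / \<delta>) *\<^sub>R (a1 - a0) + B s \<omega> - (s / \<delta>) *\<^sub>R B \<delta> \<omega>"

definition Phi :: "'w measure \<Rightarrow> (real \<Rightarrow> 'w \<Rightarrow> real ^ 'd) \<Rightarrow> real \<Rightarrow> real \<Rightarrow> real \<Rightarrow>
    real ^ 'd \<Rightarrow> real ^ 'd \<Rightarrow> real" where
  "Phi M B R \<epsilon> \<delta> a0 a1 =
     measure M {\<omega>\<in>space M. \<forall>s\<in>{0..\<delta>}. brownian_bridge \<delta> a0 a1 B s \<omega> \<in> annulusR R \<epsilon>}"

end

theory Submission
  imports Defs
begin

text \<open>Join \<open>a0\<close> to \<open>a1\<close> inside \<open>A_{R,\<epsilon>b}\<close> by a path \<open>g\<close> moving at constant speed in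
  radius and along a great circle, so that \<open>g\<close> is Lipschitz with a constant independent of
  \<open>a0, a1\<close>. The bridge minus \<open>g\<close> equals \<open>(B_s - \<phi>_s) - (s/\<delta>)(B_\<delta> - \<phi>_\<delta>)\<close> with
  \<open>\<phi> = g - (linear interpolation)\<close>, so the bridge stays in \<open>A_{R,\<epsilon>}\<close> as soon as
  \<open>|B_s - \<phi>_s| \<le> (\<epsilon> - \<epsilon>b)/2\<close> on \<open>[0,\<delta>]\<close>. This tube event has probability bounded below in
  terms of the Lipschitz constant of \<open>\<phi>\<close> only: cut \<open>[0,\<delta>]\<close> into \<open>2^m\<close> blocks and ask, in each
  block, that the Brownian increment follow that of \<open>\<phi>\<close> and that all dyadic increments
  inside the block be small (Levy's chaining). The blocks are independent; the first
  requirement costs a Gaussian factor of order \<open>2^{-m d/2}\<close>, the second fails with probability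
  \<open>O(2^{-3m})\<close> by sixth moments, which is negligible for \<open>d \<le> 3\<close> and \<open>m\<close> large. Continuity of
  the paths and of the measure pass from dyadic times to all of \<open>[0,\<delta>]\<close>.\<close>

abbreviation dyadic_point :: "real \<Rightarrow> nat \<Rightarrow> nat \<Rightarrow> real" where
  "dyadic_point \<delta> K k \<equiv> \<delta> * real k / 2^K"

lemma dyadic_point_in_interval:
  assumes "0 \<le> \<delta>" and "k \<le> 2^K"
  shows "dyadic_point \<delta> K k \<in> {0..\<delta>}"
proof -
  have "\<delta> * real k \<le> \<delta> * 2^K"
    using assms by (intro mult_left_mono) (auto simp: of_nat_le_iff[symmetric])
  then show ?thesis using assms by (simp add: divide_le_eq)
qed

text \<open>Every \<open>n < 2^k\<close> is reached from \<open>0\<close> using at most one step of each length \<open>2^(k-l)\<close>.\<close>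
lemma dyadic_chain_bound:
  fixes f :: "nat \<Rightarrow> 'a::real_normed_vector" and e :: "nat \<Rightarrow> real"
  assumes "\<forall>l\<in>{1..k}. \<forall>i<2^l. norm (f ((i+1)*2^(k-l)) - f (i*2^(k-l))) \<le> e l"
  shows "\<forall>n<2^k. norm (f n - f 0) \<le> (\<Sum>l=1..k. e l)"
  using assms
proof (induction k arbitrary: f)
  case 0
  then show ?case by (auto simp: le_Suc_eq)
next
  case (Suc k)
  define g where "g i = f (2*i)" for i
  have "\<forall>l\<in>{1..k}. \<forall>i<2^l. norm (g ((i+1)*2^(k-l)) - g (i*2^(k-l))) \<le> e l"
  proof (intro ballI allI impI)
    fix l i assume l: "l \<in> {1..k}" and i: "i < (2::nat)^l"
    have "2 * ((i+1)*2^(k-l)) = (i+1)*2^(Suc k - l)" "2 * (i*2^(k-l)) = i*2^(Suc k - l)"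
      using l by (auto simp: Suc_diff_le)
    moreover have "norm (f ((i+1)*2^(Suc k - l)) - f (i*2^(Suc k - l))) \<le> e l"
      using Suc.prems l i by auto
    ultimately show "norm (g ((i+1)*2^(k-l)) - g (i*2^(k-l))) \<le> e l"
      unfolding g_def by metis
  qed
  from Suc.IH[OF this] have IH: "\<forall>n<2^k. norm (g n - g 0) \<le> (\<Sum>l=1..k. e l)" .
  have lev: "\<forall>i<2^Suc k. norm (f (i+1) - f i) \<le> e (Suc k)"
    using bspec[OF Suc.prems, of "Suc k"] by simp
  show ?case
  proof (intro allI impI)
    fix n :: nat assume n: "n < 2^Suc k"
    define a where "a = n div 2"
    have a: "a < 2^k" using n unfolding a_def by auto
    have "norm (f (2*a) - f 0) \<le> (\<Sum>l=1..k. e l)" using IH a unfolding g_def by auto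
    moreover have "norm (f n - f (2*a)) \<le> e (Suc k)"
    proof (cases "even n")
      case True then have "n = 2*a" unfolding a_def by auto
      then have "n - 2*a = 0" by simp
      have "e (Suc k) \<ge> 0"
      proof -
        have "norm (f (0+1) - f 0) \<le> e (Suc k)"
          using lev by (metis zero_less_numeral zero_less_power)
        then show ?thesis by (meson norm_ge_zero order_trans)
      qed
      then show ?thesis using \<open>n = 2*a\<close> by simp
    next
      case False then have na: "n = 2*a + 1" unfolding a_def by presburger
      then have "2*a < 2^Suc k" using n by auto
      then have "norm (f (2*a+1) - f (2*a)) \<le> e (Suc k)"
        using lev by blast
      then show ?thesis using na by simp
    qed
    ultimately have "norm (f n - f 0) \<le> (\<Sum>l=1..k. e l) + e (Suc k)"
      using norm_triangle_ineq[of "f n - f (2*a)" "f (2*a) - f 0"] by auto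
    then show "norm (f n - f 0) \<le> (\<Sum>l=1..Suc k. e l)" by simp
  qed
qed


lemma continuous_on_dyadic_points_in_closed:
  fixes f :: "real \<Rightarrow> 'a::metric_space"
  assumes cont: "continuous_on {0..\<delta>} f" and C: "closed C" and d: "\<delta> > 0"
    and dy: "\<And>K k. k \<le> 2^K \<Longrightarrow> f (dyadic_point \<delta> K k) \<in> C"
    and s: "s \<in> {0..\<delta>}"
  shows "f s \<in> C"
proof -
  define x where "x K = \<delta> * real (nat \<lfloor>s/\<delta> * 2^K\<rfloor>) / 2^K" for K :: nat
  have xb: "x K \<in> {0..\<delta>} \<and> \<bar>x K - s\<bar> \<le> \<delta> * (1/2)^K \<and> f (x K) \<in> C" for K
  proof -
    let ?y = "s/\<delta> * 2^K"
    have y0: "?y \<ge> 0" using s d by auto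
    have y1: "?y \<le> 2^K" using s d by (auto simp: field_simps)
    have fl: "real (nat \<lfloor>?y\<rfloor>) \<le> ?y" "?y < real (nat \<lfloor>?y\<rfloor>) + 1"
      using y0 by linarith+
    have k: "nat \<lfloor>?y\<rfloor> \<le> 2^K"
      using fl y1 by (metis le_nat_floor nat_le_iff of_nat_numeral of_nat_power floor_of_nat floor_mono order_trans)
    have xs: "x K \<le> s" using fl d unfolding x_def by (simp add: field_simps)
    have e: "s - x K = (?y - real (nat \<lfloor>?y\<rfloor>)) * (\<delta> / 2^K)"
      using d unfolding x_def by (simp add: field_simps)
    have "(?y - real (nat \<lfloor>?y\<rfloor>)) * (\<delta> / 2^K) \<le> 1 * (\<delta> / 2^K)"
    proof (rule mult_right_mono)
      show "?y - real (nat \<lfloor>?y\<rfloor>) \<le> 1" using fl(2) by linarith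
      show "0 \<le> \<delta> / 2^K" using d by simp
    qed
    then have xs2: "s - x K \<le> \<delta> * (1/2)^K" using e by (simp add: power_divide)
    have "x K \<ge> 0" using d unfolding x_def by auto
    moreover have "f (x K) \<in> C" using dy[OF k] unfolding x_def .
    ultimately show ?thesis using xs xs2 s by auto
  qed
  have lim0: "(\<lambda>K. \<delta> * (1/2::real)^K) \<longlonglongrightarrow> 0"
    by (intro tendsto_mult_right_zero LIMSEQ_power_zero) auto
  have "x \<longlonglongrightarrow> s"
  proof -
    have "(\<lambda>K. x K - s) \<longlonglongrightarrow> 0"
      by (rule Lim_null_comparison[OF _ lim0]) (use xb in auto)
    then show ?thesis by (simp add: LIM_zero_iff)
  qed
  then have "(\<lambda>K. f (x K)) \<longlonglongrightarrow> f s"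
  proof (rule continuous_on_tendsto_compose[OF cont])
    show "s \<in> {0..\<delta>}" by (rule s)
    show "\<forall>\<^sub>F K in sequentially. x K \<in> {0..\<delta>}" using xb by simp
  qed
  moreover have "\<forall>K. f (x K) \<in> C" using xb by simp
  ultimately show ?thesis using closed_sequentially[OF C, of "\<lambda>K. f (x K)"] by blast
qed


lemma sets_path_in_open:
  fixes X :: "real \<Rightarrow> 'w \<Rightarrow> 'a::metric_space"
  assumes X[measurable]: "\<And>t. X t \<in> borel_measurable M"
    and cont: "\<And>\<omega>. \<omega> \<in> space M \<Longrightarrow> continuous_on {0..\<delta>} (\<lambda>s. X s \<omega>)"
    and U: "open U" and d: "\<delta> > 0"
  shows "{\<omega>\<in>space M. \<forall>s\<in>{0..\<delta>}. X s \<omega> \<in> U} \<in> sets M"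
proof (cases "U = UNIV")
  case True
  then show ?thesis by simp
next
  case False
  define F where "F = - U"
  have F: "closed F" "F \<noteq> {}" unfolding F_def using U False by auto
  text \<open>Closed subsets of \<open>U\<close> exhausting it; a continuous path in \<open>U\<close> lies in one of them.\<close>
  define A where "A n = {z. inverse (real (Suc n)) \<le> infdist z F}" for n
  have A_closed: "closed (A n)" for n
    unfolding A_def by (intro closed_Collect_le continuous_intros)
  have A_borel[measurable]: "A n \<in> sets borel" for n
    using A_closed by (rule borel_closed)
  have A_sub: "A n \<subseteq> U" for n
  proof
    fix z assume "z \<in> A n"
    then have "inverse (real (Suc n)) \<le> infdist z F" unfolding A_def by simp
    moreover have "0 < inverse (real (Suc n))" by simp
    ultimately have "0 < infdist z F" by linarith
    then show "z \<in> U" unfolding F_def by (metis ComplI infdist_zero less_irrefl)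
  qed
  have eq: "{\<omega>\<in>space M. \<forall>s\<in>{0..\<delta>}. X s \<omega> \<in> U} =
      (\<Union>n. {\<omega>\<in>space M. \<forall>K. \<forall>k\<le>2^K. X (dyadic_point \<delta> K k) \<omega> \<in> A n})"
  proof (intro equalityI subsetI)
    fix \<omega> assume "\<omega> \<in> {\<omega>\<in>space M. \<forall>s\<in>{0..\<delta>}. X s \<omega> \<in> U}"
    then have \<omega>: "\<omega> \<in> space M" and in_U: "\<forall>s\<in>{0..\<delta>}. X s \<omega> \<in> U" by auto
    have cn: "continuous_on {0..\<delta>} (\<lambda>s. infdist (X s \<omega>) F)"
      using cont[OF \<omega>] by (intro continuous_intros)
    obtain s1 where s1: "s1 \<in> {0..\<delta>}" "\<forall>s\<in>{0..\<delta>}. infdist (X s1 \<omega>) F \<le> infdist (X s \<omega>) F"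
      using continuous_attains_inf[OF compact_Icc _ cn] d by auto
    have "0 < infdist (X s1 \<omega>) F"
      using infdist_pos_not_in_closed[OF F] in_U s1(1) unfolding F_def by blast
    then obtain n where n: "inverse (real (Suc n)) < infdist (X s1 \<omega>) F"
      using reals_Archimedean by blast
    have "X (dyadic_point \<delta> K k) \<omega> \<in> A n" if "k \<le> 2^K" for K k
    proof -
      have "dyadic_point \<delta> K k \<in> {0..\<delta>}"
        using d that by (intro dyadic_point_in_interval) auto
      then have "infdist (X s1 \<omega>) F \<le> infdist (X (dyadic_point \<delta> K k) \<omega>) F" using s1(2) by blast
      then have "inverse (real (Suc n)) \<le> infdist (X (dyadic_point \<delta> K k) \<omega>) F" using n by linarith
      then show ?thesis unfolding A_def by simp
    qed
    then show "\<omega> \<in> (\<Union>n. {\<omega>\<in>space M. \<forall>K. \<forall>k\<le>2^K. X (dyadic_point \<delta> K k) \<omega> \<in> A n})"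
      using \<omega> by blast
  next
    fix \<omega> assume "\<omega> \<in> (\<Union>n. {\<omega>\<in>space M. \<forall>K. \<forall>k\<le>2^K. X (dyadic_point \<delta> K k) \<omega> \<in> A n})"
    then obtain n where \<omega>: "\<omega> \<in> space M" and "\<forall>K. \<forall>k\<le>2^K. X (dyadic_point \<delta> K k) \<omega> \<in> A n"
      by blast
    then have "X s \<omega> \<in> A n" if "s \<in> {0..\<delta>}" for s
      using continuous_on_dyadic_points_in_closed[OF cont[OF \<omega>] A_closed d _ that] by blast
    then show "\<omega> \<in> {\<omega>\<in>space M. \<forall>s\<in>{0..\<delta>}. X s \<omega> \<in> U}"
      using \<omega> A_sub by blast
  qed
  show ?thesis unfolding eq by measurable
qed

lemma measure_path_in_closed_ge:
  fixes X :: "real \<Rightarrow> 'w \<Rightarrow> 'a::metric_space"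
  assumes "prob_space M" and X[measurable]: "\<And>t. X t \<in> borel_measurable M"
    and cont: "\<And>\<omega>. \<omega> \<in> space M \<Longrightarrow> continuous_on {0..\<delta>} (\<lambda>s. X s \<omega>)"
    and C: "closed C" and d: "\<delta> > 0"
    and lb: "\<And>K. m \<le> K \<Longrightarrow> c \<le> measure M {\<omega>\<in>space M. \<forall>k\<le>2^K. X (dyadic_point \<delta> K k) \<omega> \<in> C}"
  shows "c \<le> measure M {\<omega>\<in>space M. \<forall>s\<in>{0..\<delta>}. X s \<omega> \<in> C}"
proof -
  interpret prob_space M by fact
  have C_borel[measurable]: "C \<in> sets borel" using C by (rule borel_closed)
  define E where "E K = {\<omega>\<in>space M. \<forall>k\<le>2^K. X (dyadic_point \<delta> K k) \<omega> \<in> C}" for K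
  have E_sets: "E K \<in> sets M" for K unfolding E_def by measurable
  have "E (Suc K) \<subseteq> E K" for K
  proof
    fix \<omega> assume \<omega>: "\<omega> \<in> E (Suc K)"
    show "\<omega> \<in> E K" unfolding E_def
    proof safe
      show "\<omega> \<in> space M" using \<omega> unfolding E_def by blast
      fix k :: nat assume "k \<le> 2^K"
      then have "2*k \<le> 2^Suc K" by simp
      then have "X (dyadic_point \<delta> (Suc K) (2*k)) \<omega> \<in> C" using \<omega> unfolding E_def by blast
      moreover have "dyadic_point \<delta> (Suc K) (2*k) = dyadic_point \<delta> K k" by simp
      ultimately show "X (dyadic_point \<delta> K k) \<omega> \<in> C" by simp
    qed
  qed
  then have dec: "decseq (\<lambda>n. E (m + n))" by (intro decseq_SucI) simp
  have lim: "(\<lambda>n. measure M (E (m + n))) \<longlonglongrightarrow> measure M (\<Inter>n. E (m + n))"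
    by (rule finite_Lim_measure_decseq) (use E_sets dec in auto)
  have EK: "c \<le> measure M (E K)" if "m \<le> K" for K
    using lb[OF that] unfolding E_def .
  have "c \<le> measure M (\<Inter>n. E (m + n))"
    by (rule LIMSEQ_le_const[OF lim]) (use EK in auto)
  also have "(\<Inter>n. E (m + n)) = {\<omega>\<in>space M. \<forall>s\<in>{0..\<delta>}. X s \<omega> \<in> C}"
  proof (intro equalityI subsetI)
    fix \<omega> assume \<omega>: "\<omega> \<in> (\<Inter>n. E (m + n))"
    then have \<omega>_space: "\<omega> \<in> space M" unfolding E_def by blast
    have "X (dyadic_point \<delta> K k) \<omega> \<in> C" if k: "k \<le> 2^K" for K k
    proof (cases "m \<le> K")
      case True
      then have "\<omega> \<in> E (m + (K - m))" using \<omega> by blast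
      then show ?thesis using True k unfolding E_def by simp
    next
      case False
      text \<open>Refine to level \<open>m\<close>, where the same point has index \<open>k 2^(m-K)\<close>.\<close>
      define k' where "k' = k * 2^(m-K)"
      have eqm: "(2::nat)^m = 2^K * 2^(m-K)" using False by (simp add: power_add[symmetric])
      have k': "k' \<le> 2^m" unfolding k'_def eqm using k by simp
      have eqr: "dyadic_point \<delta> m k' = dyadic_point \<delta> K k"
      proof -
        have "(2::real)^m = 2^K * 2^(m-K)" using False by (simp add: power_add[symmetric])
        then show ?thesis unfolding k'_def by simp
      qed
      have "\<omega> \<in> E (m + 0)" using \<omega> by blast
      then have "X (dyadic_point \<delta> m k') \<omega> \<in> C" using k' unfolding E_def by simp
      then show ?thesis unfolding eqr .
    qed
    then show "\<omega> \<in> {\<omega>\<in>space M. \<forall>s\<in>{0..\<delta>}. X s \<omega> \<in> C}"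
      using continuous_on_dyadic_points_in_closed[OF cont[OF \<omega>_space] C d] \<omega>_space by blast
  next
    fix \<omega> assume "\<omega> \<in> {\<omega>\<in>space M. \<forall>s\<in>{0..\<delta>}. X s \<omega> \<in> C}"
    then have \<omega>: "\<omega> \<in> space M" and all: "\<forall>s\<in>{0..\<delta>}. X s \<omega> \<in> C" by auto
    have "\<omega> \<in> E K" for K
      unfolding E_def using \<omega> all dyadic_point_in_interval[OF less_imp_le[OF d]] by blast
    then show "\<omega> \<in> (\<Inter>n. E (m + n))" by blast
  qed
  finally show ?thesis .
qed

lemma normal_tail_le_sixth_moment:
  fixes X :: "'w \<Rightarrow> real"
  assumes P: "prob_space M"
    and D: "distributed M lborel X (\<lambda>x. ennreal (normal_density 0 \<sigma> x))"
    and s: "\<sigma> > 0" and a: "a > 0"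
  shows "measure M {\<omega>\<in>space M. a < \<bar>X \<omega>\<bar>} \<le> 15 * \<sigma>^6 / a^6"
proof -
  interpret prob_space M by (rule P)
  have Xm[measurable]: "X \<in> borel_measurable M"
    using distributed_measurable[OF D] by simp
  have hb: "has_bochner_integral lborel (\<lambda>x. normal_density 0 \<sigma> x * x ^ 6) (15 * \<sigma>^6)"
  proof -
    have "has_bochner_integral lborel (\<lambda>x. normal_density 0 \<sigma> x * (x - 0) ^ (2 * 3))
           (fact (2 * 3) / ((2 / \<sigma>\<^sup>2) ^ 3 * fact 3))"
      by (rule normal_moment_even[OF s])
    moreover have "fact (2*3) / ((2 / \<sigma>\<^sup>2)^3 * fact 3) = 15 * (\<sigma>::real)^6"
      using s by (simp add: fact_numeral field_simps)
    ultimately show ?thesis by simp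
  qed
  have int1: "integrable lborel (\<lambda>x. normal_density 0 \<sigma> x * x ^ 6)"
    using hb by (rule integrable.intros)
  have int2: "integrable M (\<lambda>\<omega>. X \<omega> ^ 6)"
    using distributed_integrable[OF D, of "\<lambda>x. x^6"] int1 by (simp add: normal_density_nonneg)
  have eq: "(\<integral>\<omega>. X \<omega> ^ 6 \<partial>M) = 15 * \<sigma>^6"
    using distributed_integral[OF D, of "\<lambda>x. x^6"] has_bochner_integral_integral_eq[OF hb]
    by (simp add: normal_density_nonneg)
  have "measure M {\<omega>\<in>space M. X \<omega> ^ 6 \<ge> a^6} \<le> (\<integral>\<omega>. X \<omega> ^ 6 \<partial>M) / a^6"
    by (rule integral_Markov_inequality_measure[OF int2, of "space M"]) (use a in auto)
  moreover have "measure M {\<omega>\<in>space M. a < \<bar>X \<omega>\<bar>} \<le> measure M {\<omega>\<in>space M. X \<omega> ^ 6 \<ge> a^6}"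
  proof (rule finite_measure_mono)
    show "{\<omega>\<in>space M. X \<omega> ^ 6 \<ge> a^6} \<in> sets M" by measurable
    show "{\<omega>\<in>space M. a < \<bar>X \<omega>\<bar>} \<subseteq> {\<omega>\<in>space M. X \<omega> ^ 6 \<ge> a^6}"
    proof safe
      fix \<omega> assume "a < \<bar>X \<omega>\<bar>"
      then have "a^6 \<le> \<bar>X \<omega>\<bar>^6" using a by (intro power_mono) auto
      then show "a^6 \<le> X \<omega> ^ 6" by (simp add: power_even_abs)
    qed
  qed
  ultimately show ?thesis using eq by simp
qed

lemma normal_interval_prob_ge:
  fixes X :: "'w \<Rightarrow> real"
  assumes P: "prob_space M"
    and D: "distributed M lborel X (\<lambda>x. ennreal (normal_density 0 \<sigma> x))"
    and s: "\<sigma> > 0" and r: "r > 0"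
  shows "measure M {\<omega>\<in>space M. \<bar>X \<omega> - v\<bar> \<le> r} \<ge>
           2 * r * (exp (- (\<bar>v\<bar> + r)\<^sup>2 / (2 * \<sigma>\<^sup>2)) / sqrt (2 * pi * \<sigma>\<^sup>2))"
proof -
  interpret prob_space M by (rule P)
  define c where "c = exp (- (\<bar>v\<bar> + r)\<^sup>2 / (2 * \<sigma>\<^sup>2)) / sqrt (2 * pi * \<sigma>\<^sup>2)"
  have c0: "c \<ge> 0" unfolding c_def by simp
  have set: "{\<omega>\<in>space M. \<bar>X \<omega> - v\<bar> \<le> r} = X -` {v-r..v+r} \<inter> space M" by auto
  have "emeasure M (X -` {v-r..v+r} \<inter> space M) =
        (\<integral>\<^sup>+x. ennreal (normal_density 0 \<sigma> x) * indicator {v-r..v+r} x \<partial>lborel)"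
    by (rule distributed_emeasure[OF D]) simp
  also have "\<dots> \<ge> (\<integral>\<^sup>+x. ennreal c * indicator {v-r..v+r} x \<partial>lborel)"
  proof (rule nn_integral_mono)
    fix x
    show "ennreal c * indicator {v-r..v+r} x \<le> ennreal (normal_density 0 \<sigma> x) * indicator {v-r..v+r} x"
    proof (cases "x \<in> {v-r..v+r}")
      case True
      then have "\<bar>x\<bar> \<le> \<bar>v\<bar> + r" by auto
      then have "x\<^sup>2 \<le> (\<bar>v\<bar> + r)\<^sup>2" by (metis abs_ge_zero power2_abs power_mono)
      then have "- (\<bar>v\<bar> + r)\<^sup>2 / (2 * \<sigma>\<^sup>2) \<le> - (x - 0)\<^sup>2 / (2 * \<sigma>\<^sup>2)"
        using s by (simp add: divide_right_mono)
      then have "c \<le> normal_density 0 \<sigma> x"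
        unfolding c_def normal_density_def by (simp add: divide_right_mono)
      then show ?thesis using True by (simp add: ennreal_leI)
    qed simp
  qed
  finally have "ennreal (c * (2 * r)) \<le> emeasure M (X -` {v-r..v+r} \<inter> space M)"
    using r c0 by (simp add: nn_integral_cmult_indicator ennreal_mult)
  then have "c * (2 * r) \<le> measure M (X -` {v-r..v+r} \<inter> space M)"
    by (simp add: emeasure_eq_measure)
  then show ?thesis unfolding set c_def by (simp add: ac_simps)
qed

lemma borel_measurable_vec_nth[measurable (raw)]:
  fixes f :: "'a \<Rightarrow> real ^ 'n"
  assumes "f \<in> borel_measurable M"
  shows "(\<lambda>x. f x $ i) \<in> borel_measurable M"
  by (rule borel_measurable_continuous_on[OF _ assms])
     (intro linear_continuous_on bounded_linear_vec_nth)

lemma std_brownian_motionD: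
  assumes "std_brownian_motion M B"
  shows "prob_space M" "\<And>t. B t \<in> borel_measurable M" "\<And>\<omega>. \<omega> \<in> space M \<Longrightarrow> B 0 \<omega> = 0"
    "\<And>\<omega>. \<omega> \<in> space M \<Longrightarrow> continuous_on {0..} (\<lambda>t. B t \<omega>)"
    "\<And>n t. 0 \<le> t 0 \<Longrightarrow> (\<forall>i<n. t i < t (Suc i)) \<Longrightarrow>
        prob_space.indep_vars M (\<lambda>_. borel) (\<lambda>i \<omega>. B (t (Suc i)) \<omega> - B (t i) \<omega>) {..<n}"
    "\<And>s t. 0 \<le> s \<Longrightarrow> s < t \<Longrightarrow>
        prob_space.indep_vars M (\<lambda>_. borel) (\<lambda>i \<omega>. (B t \<omega> - B s \<omega>) $ i) UNIV"
    "\<And>s t i. 0 \<le> s \<Longrightarrow> s < t \<Longrightarrow>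
        distributed M lborel (\<lambda>\<omega>. (B t \<omega> - B s \<omega>) $ i) (\<lambda>x. ennreal (normal_density 0 (sqrt (t - s)) x))"
  using assms unfolding std_brownian_motion_def by blast+

lemma brownian_increment_tail:
  fixes B :: "real \<Rightarrow> 'w \<Rightarrow> real ^ 'd"
  assumes bm: "std_brownian_motion M B" and st: "0 \<le> s" "s < t" and a: "a > 0"
  shows "measure M {\<omega>\<in>space M. a < norm (B t \<omega> - B s \<omega>)} \<le> 15 * real CARD('d)^7 * (t-s)^3 / a^6"
proof -
  interpret prob_space M by (rule std_brownian_motionD(1)[OF bm])
  have Bm[measurable]: "\<And>t. B t \<in> borel_measurable M" by (rule std_brownian_motionD(2)[OF bm])
  define d where "d = real CARD('d)"
  have d0: "d > 0" unfolding d_def by simp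
  let ?A = "\<lambda>i. {\<omega>\<in>space M. a / d < \<bar>(B t \<omega> - B s \<omega>) $ i\<bar>}"
  have sub: "{\<omega>\<in>space M. a < norm (B t \<omega> - B s \<omega>)} \<subseteq> (\<Union>i. ?A i)"
  proof safe
    fix \<omega> assume w: "\<omega> \<in> space M" and an: "a < norm (B t \<omega> - B s \<omega>)"
    show "\<omega> \<in> (\<Union>i. ?A i)"
    proof (rule ccontr)
      assume "\<omega> \<notin> (\<Union>i. ?A i)"
      then have le: "\<And>i. \<bar>(B t \<omega> - B s \<omega>) $ i\<bar> \<le> a / d" using w by (auto simp: not_less)
      have "norm (B t \<omega> - B s \<omega>) \<le> (\<Sum>i\<in>UNIV. \<bar>(B t \<omega> - B s \<omega>) $ i\<bar>)"
        by (rule norm_le_l1_cart)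
      also have "\<dots> \<le> (\<Sum>i\<in>(UNIV::'d set). a / d)" by (intro sum_mono le)
      also have "\<dots> = a" using d0 unfolding d_def by simp
      finally show False using an by simp
    qed
  qed
  have "measure M {\<omega>\<in>space M. a < norm (B t \<omega> - B s \<omega>)} \<le> measure M (\<Union>i. ?A i)"
    by (rule finite_measure_mono[OF sub]) measurable
  also have "\<dots> \<le> (\<Sum>i\<in>UNIV. measure M (?A i))"
    by (rule finite_measure_subadditive_finite) auto
  also have "\<dots> \<le> (\<Sum>i\<in>(UNIV::'d set). 15 * sqrt (t-s) ^ 6 / (a/d)^6)"
  proof (rule sum_mono)
    fix i
    show "measure M (?A i) \<le> 15 * sqrt (t-s) ^ 6 / (a/d)^6"
      by (rule normal_tail_le_sixth_moment[OF std_brownian_motionD(1)[OF bm] std_brownian_motionD(7)[OF bm st]]) (use st a d0 in auto)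
  qed
  also have "\<dots> = 15 * d^7 * (t-s)^3 / a^6"
  proof -
    have "sqrt (t-s) ^ 6 = (t-s)^3" using st
      by (metis real_sqrt_pow2 less_eq_real_def diff_ge_0_iff_ge power_mult numeral_times_numeral
          semiring_norm(12) semiring_norm(13) numeral_Bit0 mult_2)
    moreover have "d^7 = d * d^6" by (simp add: power_Suc[symmetric] del: power_Suc)
    ultimately show ?thesis using d0 a by (simp add: field_simps power_divide d_def)
  qed
  finally show ?thesis unfolding d_def .
qed

lemma brownian_increment_box_prob_ge:
  fixes B :: "real \<Rightarrow> 'w \<Rightarrow> real ^ 'd"
  assumes bm: "std_brownian_motion M B" and st: "0 \<le> s" "s < t" and r: "r > 0"
    and v: "\<And>i. \<bar>v $ i\<bar> \<le> V"
  shows "measure M {\<omega>\<in>space M. \<forall>i. \<bar>(B t \<omega> - B s \<omega>) $ i - v $ i\<bar> \<le> r} \<ge>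
      (2 * r * (exp (- (V + r)\<^sup>2 / (2 * (t-s))) / sqrt (2 * pi * (t-s)))) ^ CARD('d)"
proof -
  interpret prob_space M by (rule std_brownian_motionD(1)[OF bm])
  have Bm[measurable]: "\<And>t. B t \<in> borel_measurable M" by (rule std_brownian_motionD(2)[OF bm])
  define X where "X i \<omega> = (B t \<omega> - B s \<omega>) $ i" for i \<omega>
  have ind: "indep_vars (\<lambda>_. borel) X UNIV" unfolding X_def by (rule std_brownian_motionD(6)[OF bm st])
  define lb where "lb = 2 * r * (exp (- (V + r)\<^sup>2 / (2 * (t-s))) / sqrt (2 * pi * (t-s)))"
  let ?A = "\<lambda>i. X i -` {y. \<bar>y - v$i\<bar> \<le> r} \<inter> space M"
  have eqs: "{\<omega>\<in>space M. \<forall>i. \<bar>(B t \<omega> - B s \<omega>) $ i - v $ i\<bar> \<le> r} = (\<Inter>i\<in>UNIV. ?A i)"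
    unfolding X_def by auto
  have "prob (\<Inter>i\<in>UNIV. ?A i) = (\<Prod>i\<in>UNIV. prob (?A i))"
  proof (rule indep_setsD)
    show "indep_sets (\<lambda>i. {X i -` A \<inter> space M |A. A \<in> sets borel}) UNIV"
      using ind unfolding indep_vars_def2 by simp
    show "\<forall>j\<in>UNIV. ?A j \<in> {X j -` A \<inter> space M |A. A \<in> sets borel}"
    proof
      fix j
      have "{y::real. \<bar>y - v$j\<bar> \<le> r} \<in> sets borel" by measurable
      then show "?A j \<in> {X j -` A \<inter> space M |A. A \<in> sets borel}" by blast
    qed
  qed auto
  also have "\<dots> \<ge> (\<Prod>i\<in>(UNIV::'d set). lb)"
  proof (rule prod_mono, safe)
    fix i :: 'd
    have sig: "sqrt (t - s) > 0" using st by simp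
    have "lb \<le> 2 * r * (exp (- (\<bar>v$i\<bar> + r)\<^sup>2 / (2 * (sqrt (t-s))\<^sup>2)) / sqrt (2 * pi * (sqrt (t-s))\<^sup>2))"
    proof -
      have "(\<bar>v$i\<bar> + r)\<^sup>2 \<le> (V + r)\<^sup>2" using v[of i] r by (intro power_mono) auto
      then have "exp (- (V + r)\<^sup>2 / (2 * (t-s))) \<le> exp (- (\<bar>v$i\<bar> + r)\<^sup>2 / (2 * (t-s)))"
        using st by (simp add: divide_right_mono)
      then show ?thesis unfolding lb_def using st r by (simp add: divide_right_mono)
    qed
    also have "\<dots> \<le> prob {\<omega>\<in>space M. \<bar>X i \<omega> - v$i\<bar> \<le> r}"
      unfolding X_def by (rule normal_interval_prob_ge[OF std_brownian_motionD(1)[OF bm] std_brownian_motionD(7)[OF bm st] sig r])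
    also have "{\<omega>\<in>space M. \<bar>X i \<omega> - v$i\<bar> \<le> r} = ?A i" by auto
    finally show "lb \<le> prob (?A i)" .
    show "0 \<le> lb" unfolding lb_def using r st by simp
  qed
  finally show ?thesis using eqs unfolding lb_def by simp
qed


lemma abs_sin_diff_le: "\<bar>sin (a::real) - sin b\<bar> \<le> \<bar>a - b\<bar>"
proof -
  have "\<bar>sin a - sin b\<bar> = 2 * \<bar>sin ((a - b)/2)\<bar> * \<bar>cos ((a + b)/2)\<bar>"
    by (simp add: sin_diff_sin abs_mult)
  also have "\<dots> \<le> 2 * \<bar>(a - b)/2\<bar> * 1"
    by (intro mult_mono abs_sin_x_le_abs_x) auto
  finally show ?thesis by simp
qed

lemma abs_cos_diff_le: "\<bar>cos (a::real) - cos b\<bar> \<le> \<bar>a - b\<bar>"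
proof -
  have "\<bar>cos a - cos b\<bar> = 2 * \<bar>sin ((a + b)/2)\<bar> * \<bar>sin ((b - a)/2)\<bar>"
    by (simp add: cos_diff_cos abs_mult)
  also have "\<dots> \<le> 2 * 1 * \<bar>(b - a)/2\<bar>"
    by (intro mult_mono abs_sin_x_le_abs_x) auto
  finally show ?thesis by simp
qed

lemma unit_vectors_great_circle:
  fixes u0 u1 :: "'a::euclidean_space"
  assumes dim: "2 \<le> DIM('a)" and n0: "norm u0 = 1" and n1: "norm u1 = 1"
  obtains \<theta> w where "0 \<le> \<theta>" "\<theta> \<le> pi" "norm w = 1" "inner u0 w = 0"
    "cos \<theta> *\<^sub>R u0 + sin \<theta> *\<^sub>R w = u1"
proof -
  define p where "p = inner u0 u1"
  have p1: "\<bar>p\<bar> \<le> 1" unfolding p_def using Cauchy_Schwarz_ineq2[of u0 u1] n0 n1 by simp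
  define v where "v = u1 - p *\<^sub>R u0"
  have u00: "inner u0 u0 = 1" using n0 by (simp add: norm_eq_sqrt_inner)
  have u11: "inner u1 u1 = 1" using n1 by (simp add: norm_eq_sqrt_inner)
  have vu0: "inner u0 v = 0" unfolding v_def p_def by (simp add: inner_diff_right u00)
  have nv2: "(norm v)\<^sup>2 = 1 - p\<^sup>2"
    unfolding v_def power2_norm_eq_inner
    by (simp add: inner_diff_left inner_diff_right u00 u11 p_def inner_commute power2_eq_square)
  obtain w0 where w0: "w0 \<noteq> 0" "orthogonal u0 w0" using orthogonal_to_vector_exists[OF dim] by blast
  define w where "w = (if v = 0 then w0 /\<^sub>R norm w0 else v /\<^sub>R norm v)"
  have nw: "norm w = 1" unfolding w_def using w0 by auto
  have iw: "inner u0 w = 0" unfolding w_def using w0 vu0 by (auto simp: orthogonal_def)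
  define \<theta> where "\<theta> = arccos p"
  have cth: "cos \<theta> = p" unfolding \<theta>_def using p1 by simp
  have sth: "sin \<theta> = norm v" unfolding \<theta>_def using p1 nv2
    by (simp add: sin_arccos_abs real_sqrt_unique)
  have "sin \<theta> *\<^sub>R w = v" using sth unfolding w_def by auto
  then have "cos \<theta> *\<^sub>R u0 + sin \<theta> *\<^sub>R w = u1" using cth unfolding v_def by simp
  moreover have "0 \<le> \<theta>" "\<theta> \<le> pi" unfolding \<theta>_def using p1 arccos_bounded by auto
  ultimately show ?thesis using that nw iw by blast
qed

lemma norm_cos_sin_combination:
  fixes u w :: "'a::real_inner"
  assumes "norm u = 1" and "norm w = 1" and "inner u w = 0"
  shows "norm (cos x *\<^sub>R u + sin x *\<^sub>R w) = 1"
proof -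
  have "inner u u = 1" "inner w w = 1" using assms(1,2) by (simp_all add: norm_eq_sqrt_inner)
  then have "(norm (cos x *\<^sub>R u + sin x *\<^sub>R w))\<^sup>2 = 1" unfolding power2_norm_eq_inner
    by (simp add: inner_add_left inner_add_right assms(3) inner_commute[of w u]
        algebra_simps power2_eq_square[symmetric])
  then show ?thesis using norm_ge_zero[of "cos x *\<^sub>R u + sin x *\<^sub>R w"] by (simp add: power2_eq_1_iff)
qed

lemma norm_cos_sin_combination_diff_le:
  fixes u w :: "'a::real_normed_vector"
  assumes "norm u = 1" and "norm w = 1"
  shows "norm ((cos x *\<^sub>R u + sin x *\<^sub>R w) - (cos y *\<^sub>R u + sin y *\<^sub>R w)) \<le> 2 * \<bar>x - y\<bar>"
proof -
  have "(cos x *\<^sub>R u + sin x *\<^sub>R w) - (cos y *\<^sub>R u + sin y *\<^sub>R w)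
      = (cos x - cos y) *\<^sub>R u + (sin x - sin y) *\<^sub>R w"
    by (simp add: algebra_simps)
  also have "norm \<dots> \<le> \<bar>cos x - cos y\<bar> + \<bar>sin x - sin y\<bar>"
    using norm_triangle_ineq[of "(cos x - cos y) *\<^sub>R u" "(sin x - sin y) *\<^sub>R w"] assms by simp
  also have "\<dots> \<le> 2 * \<bar>x - y\<bar>" using abs_cos_diff_le[of x y] abs_sin_diff_le[of x y] by simp
  finally show ?thesis .
qed

lemma annulus_Lipschitz_path:
  fixes a0 a1 :: "'a::euclidean_space"
  assumes dim: "2 \<le> DIM('a)" and d: "\<delta> > 0" and Re: "R - \<epsilon>b > 0" "\<epsilon>b > 0"
    and a0: "a0 \<in> annulusR R \<epsilon>b" and a1: "a1 \<in> annulusR R \<epsilon>b"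
  shows "\<exists>g. g 0 = a0 \<and> g \<delta> = a1 \<and> (\<forall>s\<in>{0..\<delta>}. R - \<epsilon>b < norm (g s) \<and> norm (g s) < R + \<epsilon>b) \<and>
     (\<forall>s\<in>{0..\<delta>}. \<forall>t\<in>{0..\<delta>}. norm (g s - g t) \<le> (2*\<epsilon>b + 8*(R+\<epsilon>b))/\<delta> * \<bar>s - t\<bar>)"
proof -
  define r0 where "r0 = norm a0"
  define r1 where "r1 = norm a1"
  have r0b: "R - \<epsilon>b < r0" "r0 < R + \<epsilon>b" using a0 unfolding r0_def annulusR_def annulus_def by auto
  have r1b: "R - \<epsilon>b < r1" "r1 < R + \<epsilon>b" using a1 unfolding r1_def annulusR_def annulus_def by auto
  have r0p: "r0 > 0" using r0b Re by linarith
  have r1p: "r1 > 0" using r1b Re by linarith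
  define u0 where "u0 = a0 /\<^sub>R r0"
  define u1 where "u1 = a1 /\<^sub>R r1"
  have nu0: "norm u0 = 1" unfolding u0_def r0_def using r0p r0_def by simp
  have nu1: "norm u1 = 1" unfolding u1_def r1_def using r1p r1_def by simp
  obtain \<theta> w where th: "0 \<le> \<theta>" "\<theta> \<le> pi" and nw: "norm w = 1" and iw: "inner u0 w = 0"
    and e1: "cos \<theta> *\<^sub>R u0 + sin \<theta> *\<^sub>R w = u1"
    using unit_vectors_great_circle[OF dim nu0 nu1] by blast
  define c where "c x = cos x *\<^sub>R u0 + sin x *\<^sub>R w" for x
  have nc: "norm (c x) = 1" for x
    unfolding c_def by (rule norm_cos_sin_combination[OF nu0 nw iw])
  have cl: "norm (c x - c y) \<le> 2 * \<bar>x - y\<bar>" for x y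
    unfolding c_def by (rule norm_cos_sin_combination_diff_le[OF nu0 nw])
  define \<rho> where "\<rho> s = r0 + (s / \<delta>) * (r1 - r0)" for s
  define g where "g s = \<rho> s *\<^sub>R c (\<theta> * s / \<delta>)" for s
  have g0: "g 0 = a0" unfolding g_def \<rho>_def c_def u0_def using r0p by simp
  have g1: "g \<delta> = a1" unfolding g_def \<rho>_def using d e1 r1p unfolding c_def u1_def by simp
  have \<rho>b: "R - \<epsilon>b < \<rho> s \<and> \<rho> s < R + \<epsilon>b" if s: "s \<in> {0..\<delta>}" for s
  proof -
    define q where "q = s / \<delta>"
    have q: "0 \<le> 1 - q" "0 \<le> q" unfolding q_def using s d by auto
    have e: "\<rho> s = (1 - q) * r0 + q * r1" unfolding \<rho>_def q_def using d by (simp add: field_simps)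
    have "(1 - q) * r0 + q * r1 < R + \<epsilon>b"
      using r0b r1b q by (intro convex_bound_lt) auto
    moreover have "(1 - q) * (- r0) + q * (- r1) < - (R - \<epsilon>b)"
      using r0b r1b q by (intro convex_bound_lt) auto
    moreover have "(1 - q) * (- r0) + q * (- r1) = - ((1 - q) * r0 + q * r1)" by simp
    ultimately show ?thesis unfolding e by linarith
  qed
  have ng: "norm (g s) = \<bar>\<rho> s\<bar>" for s unfolding g_def using nc by simp
  have lip: "norm (g s - g t) \<le> (2*\<epsilon>b + 8*(R+\<epsilon>b))/\<delta> * \<bar>s - t\<bar>"
    if s: "s \<in> {0..\<delta>}" and t: "t \<in> {0..\<delta>}" for s t
  proof -
    have "g s - g t = (\<rho> s - \<rho> t) *\<^sub>R c (\<theta> * s / \<delta>) + \<rho> t *\<^sub>R (c (\<theta> * s / \<delta>) - c (\<theta> * t / \<delta>))"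
      unfolding g_def by (simp add: algebra_simps)
    also have "norm \<dots> \<le> \<bar>\<rho> s - \<rho> t\<bar> + \<bar>\<rho> t\<bar> * norm (c (\<theta> * s / \<delta>) - c (\<theta> * t / \<delta>))"
      using norm_triangle_ineq[of "(\<rho> s - \<rho> t) *\<^sub>R c (\<theta> * s / \<delta>)"
          "\<rho> t *\<^sub>R (c (\<theta> * s / \<delta>) - c (\<theta> * t / \<delta>))"] nc by simp
    also have "\<dots> \<le> 2*\<epsilon>b/\<delta> * \<bar>s - t\<bar> + (R+\<epsilon>b) * (8/\<delta> * \<bar>s - t\<bar>)"
    proof (rule add_mono)
      have "\<rho> s - \<rho> t = (r1 - r0) / \<delta> * (s - t)"
        unfolding \<rho>_def using d by (simp add: field_simps)
      then have "\<bar>\<rho> s - \<rho> t\<bar> = \<bar>r1 - r0\<bar> / \<delta> * \<bar>s - t\<bar>"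
        using d by (simp add: abs_mult)
      also have "\<dots> \<le> 2*\<epsilon>b/\<delta> * \<bar>s - t\<bar>"
        using r0b r1b d by (intro mult_right_mono divide_right_mono) auto
      finally show "\<bar>\<rho> s - \<rho> t\<bar> \<le> 2*\<epsilon>b/\<delta> * \<bar>s - t\<bar>" .
      have "norm (c (\<theta> * s / \<delta>) - c (\<theta> * t / \<delta>)) \<le> 2 * \<bar>\<theta> * s / \<delta> - \<theta> * t / \<delta>\<bar>" by (rule cl)
      also have "\<dots> = 2 * \<theta> / \<delta> * \<bar>s - t\<bar>"
      proof -
        have "\<theta> * s / \<delta> - \<theta> * t / \<delta> = (\<theta> / \<delta>) * (s - t)" by (simp add: diff_divide_distrib right_diff_distrib)
        then show ?thesis using th d by (simp add: abs_mult)
      qed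
      also have "\<dots> \<le> 8/\<delta> * \<bar>s - t\<bar>" using th d pi_less_4
        by (intro mult_right_mono divide_right_mono) auto
      finally have cc: "norm (c (\<theta> * s / \<delta>) - c (\<theta> * t / \<delta>)) \<le> 8/\<delta> * \<bar>s - t\<bar>" .
      show "\<bar>\<rho> t\<bar> * norm (c (\<theta> * s / \<delta>) - c (\<theta> * t / \<delta>)) \<le> (R+\<epsilon>b) * (8/\<delta> * \<bar>s - t\<bar>)"
        using \<rho>b[OF t] Re by (intro mult_mono cc) auto
    qed
    also have "\<dots> = (2*\<epsilon>b + 8*(R+\<epsilon>b))/\<delta> * \<bar>s - t\<bar>" using d by (simp add: field_simps)
    finally show ?thesis .
  qed
  have gb: "\<forall>s\<in>{0..\<delta>}. R - \<epsilon>b < norm (g s) \<and> norm (g s) < R + \<epsilon>b"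
  proof
    fix s assume s: "s \<in> {0..\<delta>}"
    have "\<rho> s > 0" using \<rho>b[OF s] Re by linarith
    then show "R - \<epsilon>b < norm (g s) \<and> norm (g s) < R + \<epsilon>b" using \<rho>b[OF s] ng[of s] by simp
  qed
  show ?thesis
    by (rule exI[of _ g]) (use g0 g1 lip gb in \<open>blast\<close>)
qed


lemma bridge_in_annulus_near_path:
  fixes a0 a1 :: "'a::euclidean_space"
  assumes dim: "2 \<le> DIM('a)" and d: "\<delta> > 0" and \<epsilon>b: "0 < \<epsilon>b" "\<epsilon>b < \<epsilon>" "\<epsilon> < R"
    and a0: "a0 \<in> annulusR R \<epsilon>b" and a1: "a1 \<in> annulusR R \<epsilon>b"
  obtains \<phi> where "\<phi> 0 = 0" and "((2*\<epsilon>b + 10*(R+\<epsilon>b)) / \<delta>)-lipschitz_on {0..\<delta>} \<phi>"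
    and "\<And>x s. \<forall>t\<in>{0..\<delta>}. norm (x t - \<phi> t) \<le> (\<epsilon> - \<epsilon>b) / 2 \<Longrightarrow> s \<in> {0..\<delta>} \<Longrightarrow>
           a0 + (s / \<delta>) *\<^sub>R (a1 - a0) + x s - (s / \<delta>) *\<^sub>R x \<delta> \<in> annulusR R \<epsilon>"
proof -
  obtain g where g0: "g 0 = a0" and g1: "g \<delta> = a1"
    and g_ann: "\<forall>s\<in>{0..\<delta>}. R - \<epsilon>b < norm (g s) \<and> norm (g s) < R + \<epsilon>b"
    and g_lip: "\<forall>s\<in>{0..\<delta>}. \<forall>t\<in>{0..\<delta>}. norm (g s - g t) \<le> (2*\<epsilon>b + 8*(R+\<epsilon>b))/\<delta> * \<bar>s - t\<bar>"
    using annulus_Lipschitz_path[OF dim d _ \<open>0 < \<epsilon>b\<close> a0 a1] \<epsilon>b by auto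
  define \<phi> where "\<phi> s = g s - a0 - (s / \<delta>) *\<^sub>R (a1 - a0)" for s
  have \<phi>0: "\<phi> 0 = 0" unfolding \<phi>_def using g0 by simp
  have \<phi>\<delta>: "\<phi> \<delta> = 0" unfolding \<phi>_def using g1 d by simp
  have "norm (a1 - a0) \<le> norm a1 + norm a0" by (rule norm_triangle_ineq4)
  also have "\<dots> \<le> 2 * (R + \<epsilon>b)" using a0 a1 unfolding annulusR_def annulus_def by auto
  finally have a10: "norm (a1 - a0) \<le> 2 * (R + \<epsilon>b)" .
  have "norm (\<phi> s - \<phi> t) \<le> (2*\<epsilon>b + 10*(R+\<epsilon>b)) / \<delta> * \<bar>s - t\<bar>"
    if s: "s \<in> {0..\<delta>}" and t: "t \<in> {0..\<delta>}" for s t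
  proof -
    have "\<phi> s - \<phi> t = (g s - g t) - ((s - t) / \<delta>) *\<^sub>R (a1 - a0)"
      unfolding \<phi>_def by (simp add: algebra_simps diff_divide_distrib)
    moreover have "norm (((s - t) / \<delta>) *\<^sub>R (a1 - a0)) = \<bar>s - t\<bar> / \<delta> * norm (a1 - a0)"
      using d by simp
    ultimately have "norm (\<phi> s - \<phi> t) \<le> norm (g s - g t) + \<bar>s - t\<bar> / \<delta> * norm (a1 - a0)"
      by (metis norm_triangle_ineq4)
    also have "\<dots> \<le> (2*\<epsilon>b + 8*(R+\<epsilon>b))/\<delta> * \<bar>s - t\<bar> + \<bar>s - t\<bar> / \<delta> * (2 * (R + \<epsilon>b))"
      using g_lip s t a10 d by (intro add_mono mult_left_mono) auto
    also have "\<dots> = (2*\<epsilon>b + 10*(R+\<epsilon>b)) / \<delta> * \<bar>s - t\<bar>"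
      using d by (simp add: field_simps)
    finally show ?thesis .
  qed
  then have lip: "((2*\<epsilon>b + 10*(R+\<epsilon>b)) / \<delta>)-lipschitz_on {0..\<delta>} \<phi>"
    using d \<epsilon>b by (intro lipschitz_onI) (auto simp: dist_norm dist_real_def)
  have near: "a0 + (s / \<delta>) *\<^sub>R (a1 - a0) + x s - (s / \<delta>) *\<^sub>R x \<delta> \<in> annulusR R \<epsilon>"
    if x: "\<forall>t\<in>{0..\<delta>}. norm (x t - \<phi> t) \<le> (\<epsilon> - \<epsilon>b) / 2" and s: "s \<in> {0..\<delta>}" for x s
  proof -
    let ?W = "a0 + (s / \<delta>) *\<^sub>R (a1 - a0) + x s - (s / \<delta>) *\<^sub>R x \<delta>"
    have sd: "0 \<le> s / \<delta>" "s / \<delta> \<le> 1" using s d by auto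
    have "?W - g s = (x s - \<phi> s) - (s / \<delta>) *\<^sub>R (x \<delta> - \<phi> \<delta>)"
      unfolding \<phi>\<delta> unfolding \<phi>_def by (simp add: algebra_simps)
    then have "norm (?W - g s) \<le> norm (x s - \<phi> s) + (s / \<delta>) * norm (x \<delta> - \<phi> \<delta>)"
      using sd by (metis norm_triangle_ineq4 norm_scaleR abs_of_nonneg)
    also have "\<dots> \<le> (\<epsilon> - \<epsilon>b) / 2 + 1 * ((\<epsilon> - \<epsilon>b) / 2)"
      using x s d sd \<epsilon>b by (intro add_mono mult_mono) auto
    finally have "norm (?W - g s) \<le> \<epsilon> - \<epsilon>b" by simp
    moreover have "R - \<epsilon>b < norm (g s)" "norm (g s) < R + \<epsilon>b" using g_ann s by auto
    moreover have "norm (g s) - norm (?W - g s) \<le> norm ?W"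
      using norm_triangle_ineq2[of "g s" "g s - ?W"] by (simp add: norm_minus_commute)
    moreover have "norm ?W \<le> norm (g s) + norm (?W - g s)"
      using norm_triangle_ineq[of "g s" "?W - g s"] by simp
    ultimately show ?thesis unfolding annulusR_def annulus_def by auto
  qed
  show ?thesis using \<phi>0 lip near by (rule that[of \<phi>])
qed

lemma norm_le_of_increments_le:
  fixes Z :: "nat \<Rightarrow> 'a::real_normed_vector"
  assumes "Z 0 = 0" and "\<And>i. i < j \<Longrightarrow> norm (Z (Suc i) - Z i) \<le> c"
  shows "norm (Z j) \<le> real j * c"
proof -
  have "Z j = (\<Sum>i<j. Z (Suc i) - Z i)" using assms(1) by (simp add: sum_lessThan_telescope)
  also have "norm \<dots> \<le> (\<Sum>i<j. norm (Z (Suc i) - Z i))" by (rule norm_sum)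
  also have "\<dots> \<le> (\<Sum>i<j. c)" using assms(2) by (intro sum_mono) auto
  finally show ?thesis by simp
qed

lemma norm_le_card_mult_component_bound:
  fixes x :: "real ^ 'n"
  assumes "\<And>i. \<bar>x $ i\<bar> \<le> r"
  shows "norm x \<le> real CARD('n) * r"
proof -
  have "norm x \<le> (\<Sum>i\<in>UNIV. \<bar>x $ i\<bar>)" by (rule norm_le_l1_cart)
  also have "\<dots> \<le> (\<Sum>i\<in>(UNIV::'n set). r)" using assms by (intro sum_mono)
  finally show ?thesis by simp
qed

text \<open>Block \<open>j\<close> of the partition of \<open>[0,\<delta>]\<close> into \<open>2^m\<close> intervals, observed at the dyadic
  times of level \<open>K\<close>: the block increment is within \<open>r\<close> of \<open>v\<close> in each coordinate, and each
  of the \<open>2^l\<close> dyadic increments of generation \<open>l\<close> inside the block has norm at most \<open>e l\<close>.\<close>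
definition block_event :: "'w measure \<Rightarrow> (real \<Rightarrow> 'w \<Rightarrow> real ^ 'd) \<Rightarrow> real \<Rightarrow> nat \<Rightarrow> nat \<Rightarrow> real \<Rightarrow>
    (nat \<Rightarrow> real) \<Rightarrow> real ^ 'd \<Rightarrow> nat \<Rightarrow> 'w set" where
  "block_event M B \<delta> K m r e v j = {\<omega>\<in>space M.
     (\<forall>i. \<bar>(B (dyadic_point \<delta> K ((j+1)*2^(K-m))) \<omega> - B (dyadic_point \<delta> K (j*2^(K-m))) \<omega>) $ i - v $ i\<bar> \<le> r) \<and>
     (\<forall>l\<in>{1..K-m}. \<forall>i\<in>{..<2^l}.
        norm (B (dyadic_point \<delta> K (j*2^(K-m) + (i+1)*2^(K-m-l))) \<omega>
          - B (dyadic_point \<delta> K (j*2^(K-m) + i*2^(K-m-l))) \<omega>) \<le> e l)}"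

lemma dyadic_tracking_from_blocks:
  fixes f \<phi> :: "real \<Rightarrow> real ^ 'd" and e :: "nat \<Rightarrow> real"
  assumes f0: "f 0 = 0" and p0: "\<phi> 0 = 0" and d: "\<delta> > 0" and mK: "m \<le> K"
    and Lip: "L-lipschitz_on {0..\<delta>} \<phi>" and r: "r \<ge> 0" and e0: "\<And>l. e l \<ge> 0"
    and G: "\<forall>j<2^m. \<forall>i. \<bar>(f (dyadic_point \<delta> K ((j+1)*2^(K-m))) - f (dyadic_point \<delta> K (j*2^(K-m)))) $ i
                 - (\<phi> (dyadic_point \<delta> K ((j+1)*2^(K-m))) - \<phi> (dyadic_point \<delta> K (j*2^(K-m)))) $ i\<bar> \<le> r"
    and F: "\<forall>j<2^m. \<forall>l\<in>{1..K-m}. \<forall>i<2^l.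
              norm (f (dyadic_point \<delta> K (j*2^(K-m) + (i+1)*2^(K-m-l)))
                  - f (dyadic_point \<delta> K (j*2^(K-m) + i*2^(K-m-l)))) \<le> e l"
    and par: "2^m * real CARD('d) * r + (\<Sum>l=1..K-m. e l) + L * (\<delta> / 2^m) \<le> \<eta>"
  shows "\<forall>k\<le>2^K. norm (f (dyadic_point \<delta> K k) - \<phi> (dyadic_point \<delta> K k)) \<le> \<eta>"
proof (intro allI impI)
  fix k :: nat assume k: "k \<le> 2^K"
  have L: "L \<ge> 0" using Lip by (rule lipschitz_on_nonneg)
  define p where "p k = \<delta> * real k / 2^K" for k :: nat
  define b :: nat where "b = 2^(K-m)"
  define N :: nat where "N = 2^m"
  have Nb: "N * b = 2^K" unfolding N_def b_def using mK by (simp add: power_add[symmetric])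
  have b0: "b > 0" unfolding b_def by simp
  have pin: "p k' \<in> {0..\<delta>}" if "k' \<le> 2^K" for k'
    unfolding p_def using d that by (auto simp: field_simps)
  define Z where "Z i = f (p (i*b)) - \<phi> (p (i*b))" for i
  have Z0: "Z 0 = 0" unfolding Z_def p_def using f0 p0 by simp
  have Zb: "norm (Z j) \<le> real j * (real CARD('d) * r)" if j: "j \<le> N" for j
  proof (rule norm_le_of_increments_le[where Z=Z, OF Z0])
    fix i assume "i < j"
    then have iN: "i < 2^m" using j unfolding N_def by auto
    have "\<bar>(Z (Suc i) - Z i) $ c\<bar> \<le> r" for c
    proof -
      have "Z (Suc i) - Z i = (f (p ((i+1)*b)) - f (p (i*b))) - (\<phi> (p ((i+1)*b)) - \<phi> (p (i*b)))"
        unfolding Z_def by simp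
      then show ?thesis using G iN unfolding p_def b_def by simp
    qed
    then show "norm (Z (Suc i) - Z i) \<le> real CARD('d) * r"
      by (rule norm_le_card_mult_component_bound)
  qed
  define j where "j = k div b"
  define n where "n = k mod b"
  have kjn: "k = j * b + n" unfolding j_def n_def by simp
  have nb: "n < b" unfolding n_def using b0 by simp
  have jN: "j \<le> N"
  proof -
    have "j * b \<le> N * b" using kjn k Nb by linarith
    then show ?thesis using b0 by simp
  qed
  have dr: "real CARD('d) * r \<ge> 0" using r by simp
  have ZN: "norm (Z j) \<le> 2^m * real CARD('d) * r"
  proof -
    have "real j * (real CARD('d) * r) \<le> real N * (real CARD('d) * r)"
      using jN dr by (intro mult_right_mono) auto
    then have "real j * (real CARD('d) * r) \<le> 2^m * real CARD('d) * r" unfolding N_def by (simp add: mult.assoc)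
    then show ?thesis using Zb[OF jN] by linarith
  qed
  have sum0: "(\<Sum>l=1..K-m. e l) \<ge> 0" using e0 by (simp add: sum_nonneg)
  show "norm (f (dyadic_point \<delta> K k) - \<phi> (dyadic_point \<delta> K k)) \<le> \<eta>"
  proof (cases "n = 0")
    case True
    then have "f (dyadic_point \<delta> K k) - \<phi> (dyadic_point \<delta> K k) = Z j"
      unfolding Z_def p_def using kjn by simp
    then show ?thesis using ZN par sum0 L d by (smt (verit) divide_nonneg_pos mult_nonneg_nonneg zero_less_power)
  next
    case False
    then have jlt: "j < N"
    proof -
      have "j * b < N * b" using kjn k Nb False by linarith
      then show ?thesis by (simp add: mult_less_cancel2)
    qed
    define g where "g i = f (p (j*b + i))" for i
    have ch: "\<forall>i<2^(K-m). norm (g i - g 0) \<le> (\<Sum>l=1..K-m. e l)"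
    proof (rule dyadic_chain_bound)
      show "\<forall>l\<in>{1..K-m}. \<forall>i<2^l. norm (g ((i+1)*2^(K-m-l)) - g (i*2^(K-m-l))) \<le> e l"
        using F jlt unfolding g_def p_def b_def N_def by simp
    qed
    have gn: "norm (f (p k) - f (p (j*b))) \<le> (\<Sum>l=1..K-m. e l)"
      using ch nb kjn unfolding g_def b_def by simp
    have kle: "k \<le> 2^K" by (rule k)
    have jble: "j * b \<le> 2^K" using kjn k by simp
    have "norm (\<phi> (p k) - \<phi> (p (j*b))) \<le> L * \<bar>p k - p (j*b)\<bar>"
      using lipschitz_onD[OF Lip pin[OF kle] pin[OF jble]] by (simp add: dist_norm dist_real_def)
    also have "\<bar>p k - p (j*b)\<bar> = \<delta> * real n / 2^K" unfolding p_def using kjn d by (simp add: field_simps)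
    also have "\<dots> \<le> \<delta> / 2^m"
    proof -
      have "real n \<le> real b" using nb by simp
      then have "\<delta> * real n / 2^K \<le> \<delta> * real b / 2^K" using d by (simp add: divide_right_mono)
      also have "\<delta> * real b / 2^K = \<delta> / 2^m"
      proof -
        have "(2::real)^K = 2^(K-m) * 2^m" using mK by (simp add: power_add[symmetric])
        then show ?thesis unfolding b_def by simp
      qed
      finally show ?thesis .
    qed
    finally have pl: "norm (\<phi> (p k) - \<phi> (p (j*b))) \<le> L * (\<delta> / 2^m)" using L by (simp add: mult_left_mono order_trans)
    have eq: "f (p k) - \<phi> (p k) = Z j + (f (p k) - f (p (j*b))) - (\<phi> (p k) - \<phi> (p (j*b)))"
      unfolding Z_def by simp
    have "norm (f (p k) - \<phi> (p k)) = norm (Z j + (f (p k) - f (p (j*b))) - (\<phi> (p k) - \<phi> (p (j*b))))"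
      by (simp only: eq)
    moreover have "norm (Z j + (f (p k) - f (p (j*b))) - (\<phi> (p k) - \<phi> (p (j*b))))
        \<le> norm (Z j) + norm (f (p k) - f (p (j*b))) + norm (\<phi> (p k) - \<phi> (p (j*b)))"
      by (intro order_trans[OF norm_triangle_ineq4] add_right_mono norm_triangle_ineq)
    ultimately have "norm (f (p k) - \<phi> (p k)) \<le> norm (Z j) + norm (f (p k) - f (p (j*b))) + norm (\<phi> (p k) - \<phi> (p (j*b)))"
      by simp
    then show ?thesis using ZN gn pl par unfolding p_def by linarith
  qed
qed


lemma measurable_PiM_component_borel[measurable]:
  "(\<lambda>x. x k) \<in> borel_measurable (PiM J (\<lambda>_. (borel :: ('b::topological_space) measure)))"
proof (cases "k \<in> J")
  case True then show ?thesis by measurable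
next
  case False
  have "(\<lambda>_. undefined) \<in> borel_measurable (PiM J (\<lambda>_. (borel :: 'b measure)))" by simp
  moreover have "\<And>x. x \<in> space (PiM J (\<lambda>_. (borel :: 'b measure))) \<Longrightarrow> x k = undefined"
    unfolding space_PiM using False by (auto intro: PiE_arb)
  ultimately show ?thesis using measurable_cong by (metis (no_types, lifting))
qed

lemma disjoint_family_consecutive_blocks: "disjoint_family (\<lambda>j::nat. {j*b..<(j+1)*b})"
  unfolding disjoint_family_on_def
proof (intro ballI impI)
  fix i j :: nat assume "i \<noteq> j"
  then consider "i < j" | "j < i" by linarith
  then show "{i*b..<(i+1)*b} \<inter> {j*b..<(j+1)*b} = {}"
  proof cases
    case 1 then have "(i+1)*b \<le> j*b" by (intro mult_right_mono) auto
    then show ?thesis by auto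
  next
    case 2 then have "(j+1)*b \<le> i*b" by (intro mult_right_mono) auto
    then show ?thesis by auto
  qed
qed

lemma block_events_indep:
  fixes B :: "real \<Rightarrow> 'w \<Rightarrow> real ^ 'd" and v :: "nat \<Rightarrow> real ^ 'd" and e :: "nat \<Rightarrow> real" and r :: real
  assumes bm: "std_brownian_motion M B" and d: "\<delta> > 0" and mK: "m \<le> K"
  shows "measure M (\<Inter>j\<in>{..<2^m}. block_event M B \<delta> K m r e (v j) j)
    = (\<Prod>j\<in>{..<2^m}. measure M (block_event M B \<delta> K m r e (v j) j))"
proof -
  define H where "H j = block_event M B \<delta> K m r e (v j) j" for j
  interpret prob_space M by (rule std_brownian_motionD(1)[OF bm])
  have Bm[measurable]: "\<And>t. B t \<in> borel_measurable M" by (rule std_brownian_motionD(2)[OF bm])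
  define p where "p k = \<delta> * real k / 2^K" for k :: nat
  define b :: nat where "b = 2^(K-m)"
  define N :: nat where "N = 2^m"
  have Nb: "N * b = 2^K" unfolding N_def b_def using mK by (simp add: power_add[symmetric])
  define D where "D k \<omega> = B (p (Suc k)) \<omega> - B (p k) \<omega>" for k \<omega>
  have indD: "indep_vars (\<lambda>_. borel) D {..<2^K}"
    unfolding D_def
    by (rule std_brownian_motionD(5)[OF bm]) (auto simp: p_def d divide_strict_right_mono)
  define J where "J j = {j*b..<(j+1)*b}" for j
  have JK: "J j \<subseteq> {..<2^K}" if "j \<in> {..<N}" for j
  proof -
    have "(j+1)*b \<le> N*b" using that by (intro mult_right_mono) auto
    then show ?thesis unfolding J_def using Nb by auto
  qed
  have "J = (\<lambda>j. {j*b..<(j+1)*b})" by (simp add: J_def fun_eq_iff)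
  then have disj: "disjoint_family_on J {..<N}"
    using disjoint_family_on_mono[OF subset_UNIV disjoint_family_consecutive_blocks] by simp
  define Y where "Y j \<omega> = restrict (\<lambda>k. D k \<omega>) (J j)" for j \<omega>
  have indY: "indep_vars (\<lambda>j. PiM (J j) (\<lambda>_. borel)) Y {..<N}"
    unfolding Y_def by (rule indep_vars_restrict[OF indD JK disj])
  define S where "S j x n = (\<Sum>k\<in>{j*b..<j*b+n}. (x k :: real ^ 'd))" for j x n
  define A where "A j = {x\<in>space (PiM (J j) (\<lambda>_. borel)).
      (\<forall>i. \<bar>S j x b $ i - v j $ i\<bar> \<le> r) \<and>
      (\<forall>l\<in>{1..K-m}. \<forall>i\<in>{..<2^l}. norm (S j x ((i+1)*2^(K-m-l)) - S j x (i*2^(K-m-l))) \<le> e l)}" for j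
  have Am: "A j \<in> sets (PiM (J j) (\<lambda>_. borel))" for j
    unfolding A_def S_def by measurable
  have SY: "S j (Y j \<omega>) n = B (p (j*b + n)) \<omega> - B (p (j*b)) \<omega>" if "n \<le> b" for j \<omega> n
  proof -
    have "S j (Y j \<omega>) n = (\<Sum>k\<in>{j*b..<j*b+n}. D k \<omega>)"
      unfolding S_def Y_def J_def using that by (intro sum.cong) auto
    also have "\<dots> = B (p (j*b + n)) \<omega> - B (p (j*b)) \<omega>"
      unfolding D_def by (rule sum_Suc_diff') simp
    finally show ?thesis .
  qed
  have le_b: "(i+1)*2^(K-m-l) \<le> b" "i*2^(K-m-l) \<le> b" if "l \<in> {1..K-m}" "i < 2^l" for i l :: nat
  proof -
    have "(i+1)*2^(K-m-l) \<le> 2^l * 2^(K-m-l)" using that by (intro mult_right_mono) auto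
    also have "\<dots> = b"
    proof -
      have "l + (K-m-l) = K-m" using that by auto
      then show ?thesis unfolding b_def by (metis power_add)
    qed
    finally show "(i+1)*2^(K-m-l) \<le> b" .
    then show "i*2^(K-m-l) \<le> b" by simp
  qed
  have HY: "H j = Y j -` A j \<inter> space M" for j
  proof -
    have Ysp: "Y j \<omega> \<in> space (PiM (J j) (\<lambda>_. borel))" for \<omega>
      unfolding Y_def by (simp add: space_PiM)
    have "(\<omega> \<in> H j) \<longleftrightarrow> (\<omega> \<in> Y j -` A j \<inter> space M)" for \<omega>
    proof -
      have E1: "B (dyadic_point \<delta> K ((j+1)*2^(K-m))) \<omega> - B (dyadic_point \<delta> K (j*2^(K-m))) \<omega> = S j (Y j \<omega>) b"
        using SY[of b j \<omega>] unfolding p_def b_def by (simp add: algebra_simps)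
      have E2: "B (dyadic_point \<delta> K (j*2^(K-m) + (i+1)*2^(K-m-l))) \<omega>
              - B (dyadic_point \<delta> K (j*2^(K-m) + i*2^(K-m-l))) \<omega> =
          S j (Y j \<omega>) ((i+1)*2^(K-m-l)) - S j (Y j \<omega>) (i*2^(K-m-l))"
        if "l \<in> {1..K-m}" "i \<in> {..<2^l}" for l i
        using SY[OF le_b(1), of l i j \<omega>] SY[OF le_b(2), of l i j \<omega>] that
        unfolding p_def b_def by simp
      have c1: "(\<forall>i. \<bar>(B (dyadic_point \<delta> K ((j+1)*2^(K-m))) \<omega> - B (dyadic_point \<delta> K (j*2^(K-m))) \<omega>) $ i - v j $ i\<bar> \<le> r)
          \<longleftrightarrow> (\<forall>i. \<bar>S j (Y j \<omega>) b $ i - v j $ i\<bar> \<le> r)"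
        by (simp only: E1)
      have c2: "(\<forall>l\<in>{1..K-m}. \<forall>i\<in>{..<2^l}.
          norm (B (dyadic_point \<delta> K (j*2^(K-m) + (i+1)*2^(K-m-l))) \<omega>
              - B (dyadic_point \<delta> K (j*2^(K-m) + i*2^(K-m-l))) \<omega>) \<le> e l)
          \<longleftrightarrow> (\<forall>l\<in>{1..K-m}. \<forall>i\<in>{..<2^l}. norm (S j (Y j \<omega>) ((i+1)*2^(K-m-l)) - S j (Y j \<omega>) (i*2^(K-m-l))) \<le> e l)"
        by (intro ball_cong refl) (simp only: E2)
      have h1: "(\<omega> \<in> H j) \<longleftrightarrow> \<omega> \<in> space M \<and>
          (\<forall>i. \<bar>(B (dyadic_point \<delta> K ((j+1)*2^(K-m))) \<omega> - B (dyadic_point \<delta> K (j*2^(K-m))) \<omega>) $ i - v j $ i\<bar> \<le> r) \<and>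
          (\<forall>l\<in>{1..K-m}. \<forall>i\<in>{..<2^l}.
          norm (B (dyadic_point \<delta> K (j*2^(K-m) + (i+1)*2^(K-m-l))) \<omega>
              - B (dyadic_point \<delta> K (j*2^(K-m) + i*2^(K-m-l))) \<omega>) \<le> e l)"
        by (simp only: H_def block_event_def mem_Collect_eq)
      have h2: "(\<omega> \<in> Y j -` A j \<inter> space M) \<longleftrightarrow> \<omega> \<in> space M \<and> (\<forall>i. \<bar>S j (Y j \<omega>) b $ i - v j $ i\<bar> \<le> r) \<and>
           (\<forall>l\<in>{1..K-m}. \<forall>i\<in>{..<2^l}. norm (S j (Y j \<omega>) ((i+1)*2^(K-m-l)) - S j (Y j \<omega>) (i*2^(K-m-l))) \<le> e l)"
        using Ysp[of \<omega>] unfolding A_def vimage_eq Int_iff mem_Collect_eq by (simp only: simp_thms conj_ac)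
      show ?thesis unfolding h1 h2 c1 c2 by (rule refl)
    qed
    then show ?thesis by blast
  qed
  have "prob (\<Inter>j\<in>{..<N}. Y j -` A j \<inter> space M) = (\<Prod>j\<in>{..<N}. prob (Y j -` A j \<inter> space M))"
  proof (rule indep_setsD)
    show "indep_sets (\<lambda>j. {Y j -` X \<inter> space M |X. X \<in> sets (PiM (J j) (\<lambda>_. borel))}) {..<N}"
      using indY unfolding indep_vars_def2 by simp
    show "\<forall>j\<in>{..<N}. Y j -` A j \<inter> space M \<in> {Y j -` X \<inter> space M |X. X \<in> sets (PiM (J j) (\<lambda>_. borel))}"
      using Am by blast
    have "0 \<in> {..<N}" unfolding N_def by simp
    then show "{..<N} \<noteq> {}" by blast
  qed auto
  moreover have "(\<Inter>j\<in>{..<N}. H j) = (\<Inter>j\<in>{..<N}. Y j -` A j \<inter> space M)" by (simp only: HY)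
  moreover have "(\<Prod>j\<in>{..<N}. prob (H j)) = (\<Prod>j\<in>{..<N}. prob (Y j -` A j \<inter> space M))" by (simp only: HY)
  ultimately show ?thesis unfolding N_def[symmetric] H_def by (simp only:)
qed


lemma sum_power_half: "(\<Sum>l=1..k. (1/2::real)^l) = 1 - (1/2)^k"
  by (induction k) (auto simp: field_simps)

lemma sum_power_nine_tenths: "(\<Sum>l=1..k. (9/10::real)^l) = 9 - 9 * (9/10)^k"
  by (induction k) (auto simp: field_simps)

lemma sixth_moment_chain_sum_le:
  fixes D h A :: real
  assumes D: "D \<ge> 0" and h: "h \<ge> 0" and A: "A > 0"
  shows "(\<Sum>l=1..k. 2^l * (15 * D * (h / 2^l)^3 / (A * (9/10)^l)^6)) \<le> 15 * D * h^3 / A^6"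
proof -
  define C where "C = 15 * D * h^3 / A^6"
  have C0: "C \<ge> 0" unfolding C_def using D h A by simp
  have trm: "2^l * (15 * D * (h / 2^l)^3 / (A * (9/10)^l)^6) = C * (250000/531441)^l" for l :: nat
  proof -
    have p1: "((9/10::real)^l)^6 = ((9/10)^6)^l" by (metis power_mult mult.commute)
    have p2: "((2::real)^l)^3 = (2^3)^l" by (metis power_mult mult.commute)
    have "(A * (9/10::real)^l)^6 = A^6 * (531441/1000000)^l"
    proof -
      have "(9/10::real)^6 = 531441/1000000" by (simp add: power_divide)
      then show ?thesis by (simp only: power_mult_distrib p1)
    qed
    moreover have "(h / 2^l)^3 = h^3 / 8^l"
      by (simp only: power_divide p2) simp
    moreover have "(250000/531441::real)^l = 2^l / (8^l * (531441/1000000)^l)"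
    proof -
      have eq: "(250000/531441::real) = 2 / (8 * (531441/1000000))" by simp
      show ?thesis unfolding eq power_divide[of 2] power_mult_distrib by (rule refl)
    qed
    moreover have gen: "x * (15 * D * (h^3 / y) / (A^6 * z)) = (15 * D * h^3 / A^6) * (x / (y * z))"
      if "y \<noteq> 0" "z \<noteq> 0" for x y z :: real using that A by (simp add: field_simps)
    ultimately show ?thesis unfolding C_def by (simp only: gen[of "8^l" "(531441/1000000)^l" "2^l"] power_not_zero) simp
  qed
  have "(\<Sum>l=1..k. 2^l * (15 * D * (h / 2^l)^3 / (A * (9/10)^l)^6)) = (\<Sum>l=1..k. C * (250000/531441)^l)"
    using trm by simp
  also have "\<dots> \<le> (\<Sum>l=1..k. C * (1/2)^l)"
    by (intro sum_mono mult_left_mono power_mono C0) auto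
  also have "\<dots> = C * (1 - (1/2)^k)" by (simp only: sum_distrib_left[symmetric] sum_power_half)
  also have "\<dots> \<le> C" using C0 by (simp add: mult_left_le)
  finally show ?thesis unfolding C_def .
qed


lemma block_event_prob_ge:
  fixes B :: "real \<Rightarrow> 'w \<Rightarrow> real ^ 'd" and v :: "real ^ 'd" and e :: "nat \<Rightarrow> real" and r V :: real
  assumes bm: "std_brownian_motion M B" and d: "\<delta> > 0" and mK: "m \<le> K" and r: "r > 0"
    and e: "\<And>l. e l > 0" and v: "\<And>i. \<bar>v $ i\<bar> \<le> V"
  shows "measure M (block_event M B \<delta> K m r e v j)
    \<ge> (2 * r * (exp (- (V + r)\<^sup>2 / (2 * (\<delta> / 2^m))) / sqrt (2 * pi * (\<delta> / 2^m)))) ^ CARD('d)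
       - (\<Sum>l=1..K-m. 2^l * (15 * real CARD('d)^7 * ((\<delta> / 2^m) / 2^l)^3 / (e l)^6))"
    (is "measure M ?H \<ge> _ - ?S")
proof -
  interpret prob_space M by (rule std_brownian_motionD(1)[OF bm])
  have Bm[measurable]: "\<And>t. B t \<in> borel_measurable M" by (rule std_brownian_motionD(2)[OF bm])
  define h where "h = \<delta> / 2^m"
  have two: "(2::real)^K = 2^(K-m) * 2^m" using mK by (simp add: power_add[symmetric])
  define s0 where "s0 = \<delta> * real (j*2^(K-m)) / 2^K"
  define t0 where "t0 = \<delta> * real ((j+1)*2^(K-m)) / 2^K"
  have st0: "t0 - s0 = h" unfolding t0_def s0_def h_def using two
    by (simp add: field_simps)
  have s00: "0 \<le> s0" unfolding s0_def using d by simp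
  have h0: "h > 0" unfolding h_def using d by simp
  let ?G = "{\<omega>\<in>space M. \<forall>i. \<bar>(B t0 \<omega> - B s0 \<omega>) $ i - v $ i\<bar> \<le> r}"
  define T where "T l i = {\<omega>\<in>space M. e l < norm (B (dyadic_point \<delta> K (j*2^(K-m) + (i+1)*2^(K-m-l))) \<omega>
              - B (dyadic_point \<delta> K (j*2^(K-m) + i*2^(K-m-l))) \<omega>)}" for l i
  let ?U = "\<Union>l\<in>{1..K-m}. \<Union>i\<in>{..<2^l}. T l i"
  have Tm: "T l i \<in> sets M" for l i unfolding T_def by measurable
  have Gsub: "?G \<subseteq> ?H \<union> ?U"
  proof
    fix \<omega> assume w: "\<omega> \<in> ?G"
    show "\<omega> \<in> ?H \<union> ?U"
    proof (cases "\<forall>l\<in>{1..K-m}. \<forall>i\<in>{..<2^l}.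
          norm (B (dyadic_point \<delta> K (j*2^(K-m) + (i+1)*2^(K-m-l))) \<omega>
              - B (dyadic_point \<delta> K (j*2^(K-m) + i*2^(K-m-l))) \<omega>) \<le> e l")
      case True
      then have "\<omega> \<in> ?H" using w unfolding block_event_def s0_def t0_def by blast
      then show ?thesis by blast
    next
      case False
      then obtain l i where li: "l \<in> {1..K-m}" "i \<in> {..<2^l}" and
        gt: "e l < norm (B (dyadic_point \<delta> K (j*2^(K-m) + (i+1)*2^(K-m-l))) \<omega>
              - B (dyadic_point \<delta> K (j*2^(K-m) + i*2^(K-m-l))) \<omega>)"
        by (auto simp: not_le)
      have "\<omega> \<in> T l i" unfolding T_def using gt w by blast
      then show ?thesis using li by blast
    qed
  qed
  have Hm: "?H \<in> sets M" unfolding block_event_def by measurable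
  have Um: "?U \<in> sets M" using Tm by (intro sets.finite_UN) auto
  have "prob ?G \<le> prob (?H \<union> ?U)" by (rule finite_measure_mono[OF Gsub]) (use Hm Um in auto)
  also have "\<dots> \<le> prob ?H + prob ?U" by (rule measure_subadditive[OF Hm Um]) auto
  finally have A1: "prob ?G \<le> prob ?H + prob ?U" .
  have "prob ?U \<le> (\<Sum>l\<in>{1..K-m}. prob (\<Union>i\<in>{..<2^l}. T l i))"
    by (rule finite_measure_subadditive_finite) (use Tm in auto)
  also have "\<dots> \<le> (\<Sum>l\<in>{1..K-m}. \<Sum>i\<in>{..<(2::nat)^l}. prob (T l i))"
    by (intro sum_mono finite_measure_subadditive_finite) (use Tm in auto)
  also have "\<dots> \<le> (\<Sum>l\<in>{1..K-m}. \<Sum>i\<in>{..<(2::nat)^l}. 15 * real CARD('d)^7 * (h / 2^l)^3 / (e l)^6)"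
  proof (intro sum_mono)
    fix l i assume l: "l \<in> {1..K-m}" and i: "i \<in> {..<(2::nat)^l}"
    define s1 where "s1 = \<delta> * real (j*2^(K-m) + i*2^(K-m-l)) / 2^K"
    define t1 where "t1 = \<delta> * real (j*2^(K-m) + (i+1)*2^(K-m-l)) / 2^K"
    have two2: "(2::real)^K = 2^(K-m-l) * 2^l * 2^m"
    proof -
      have "K = K-m-l + l + m" using mK l by auto
      then show ?thesis by (metis power_add)
    qed
    have st1: "t1 - s1 = h / 2^l" unfolding t1_def s1_def h_def using two2
      by (simp add: field_simps)
    have "0 \<le> s1" unfolding s1_def using d by simp
    moreover have "s1 < t1"
    proof -
      have "h / 2^l > 0" using h0 by simp
      then show ?thesis using st1 by linarith
    qed
    ultimately have "prob (T l i) \<le> 15 * real CARD('d)^7 * (t1 - s1)^3 / (e l)^6"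
      unfolding T_def s1_def[symmetric] t1_def[symmetric] by (intro brownian_increment_tail[OF bm] e)
    then show "prob (T l i) \<le> 15 * real CARD('d)^7 * (h / 2^l)^3 / (e l)^6" using st1 by simp
  qed
  also have "\<dots> = ?S" unfolding h_def by simp
  finally have A2: "prob ?U \<le> ?S" .
  have "(2 * r * (exp (- (V + r)\<^sup>2 / (2 * (t0 - s0))) / sqrt (2 * pi * (t0 - s0)))) ^ CARD('d) \<le> prob ?G"
    by (rule brownian_increment_box_prob_ge[OF bm s00 _ r v]) (use st0 h0 in simp)
  then show ?thesis using A1 A2 st0 unfolding h_def by simp
qed


lemma gaussian_block_factor_ge:
  fixes N \<delta> \<eta> dd L :: real
  assumes N: "N \<ge> 1" and d: "\<delta> > 0" and e: "\<eta> > 0" and dd: "dd > 0" and L: "L \<ge> 0"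
  shows "2 * (\<eta> / (3 * dd * N)) * (exp (- (L * (\<delta> / N) + \<eta> / (3 * dd * N))\<^sup>2 / (2 * (\<delta> / N))) / sqrt (2 * pi * (\<delta> / N)))
     \<ge> (2 * \<eta> * exp (- (L\<^sup>2 * \<delta> + \<eta>\<^sup>2 / (9 * dd\<^sup>2 * \<delta>))) / (3 * dd * sqrt (2 * pi * \<delta>))) / sqrt N"
proof -
  define h where "h = \<delta> / N"
  define r where "r = \<eta> / (3 * dd * N)"
  define E where "E = exp (- (L * h + r)\<^sup>2 / (2 * h))"
  define E0 where "E0 = exp (- (L\<^sup>2 * \<delta> + \<eta>\<^sup>2 / (9 * dd\<^sup>2 * \<delta>)))"
  define K0 where "K0 = 2 * \<eta> / (3 * dd * sqrt (2 * pi * \<delta>))"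
  have h0: "h > 0" unfolding h_def using N d by simp
  have r0: "r > 0" unfolding r_def using N e dd by simp
  have sN: "sqrt N > 0" using N by simp
  have NN: "N = sqrt N * sqrt N" using N by simp
  have sq: "sqrt (2 * pi * h) = sqrt (2 * pi * \<delta>) / sqrt N"
    unfolding h_def by (simp add: real_sqrt_divide)
  have sp: "sqrt (2 * pi * \<delta>) > 0" using d by simp
  have e1: "2 * r / sqrt (2 * pi * h) = K0 / sqrt N"
  proof -
    have "2 * r / sqrt (2 * pi * h) = 2 * \<eta> / (3 * dd * N) * sqrt N / sqrt (2 * pi * \<delta>)"
      unfolding sq r_def by simp
    also have "\<dots> = 2 * \<eta> / (3 * dd * sqrt N * sqrt N) * sqrt N / sqrt (2 * pi * \<delta>)"
      using NN by (metis mult.assoc)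
    also have "\<dots> = K0 / sqrt N" unfolding K0_def using sN dd sp by (simp add: field_simps)
    finally show ?thesis .
  qed
  have ex: "(L * h + r)\<^sup>2 / (2 * h) \<le> L\<^sup>2 * \<delta> + \<eta>\<^sup>2 / (9 * dd\<^sup>2 * \<delta>)"
  proof -
    have "(L * h + r)\<^sup>2 \<le> 2 * (L * h)\<^sup>2 + 2 * r\<^sup>2"
    proof -
      have "0 \<le> (L * h - r)\<^sup>2" by simp
      then show ?thesis by (simp add: power2_eq_square algebra_simps)
    qed
    then have "(L * h + r)\<^sup>2 / (2 * h) \<le> (2 * (L * h)\<^sup>2 + 2 * r\<^sup>2) / (2 * h)"
      using h0 by (simp add: divide_right_mono)
    also have "\<dots> = L\<^sup>2 * h + r\<^sup>2 / h" using h0 by (simp add: field_simps power2_eq_square)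
    also have "L\<^sup>2 * h \<le> L\<^sup>2 * \<delta>"
    proof (rule mult_left_mono)
      show "h \<le> \<delta>" unfolding h_def using N d by (simp add: divide_le_eq)
    qed simp
    also have "r\<^sup>2 / h = \<eta>\<^sup>2 / (9 * dd\<^sup>2 * \<delta>) / N" unfolding r_def h_def using N d dd
      by (simp add: field_simps power2_eq_square)
    also have "\<dots> \<le> \<eta>\<^sup>2 / (9 * dd\<^sup>2 * \<delta>)"
    proof -
      have "\<eta>\<^sup>2 / (9 * dd\<^sup>2 * \<delta>) \<ge> 0" using d dd by simp
      then have "\<eta>\<^sup>2 / (9 * dd\<^sup>2 * \<delta>) / N \<le> \<eta>\<^sup>2 / (9 * dd\<^sup>2 * \<delta>) / 1"
        using N by (intro divide_left_mono) auto
      then show ?thesis by simp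
    qed
    finally show ?thesis by simp
  qed
  have "E0 \<le> E" unfolding E0_def E_def using ex by simp
  then have "(K0 / sqrt N) * E0 \<le> (K0 / sqrt N) * E"
    unfolding K0_def using e dd sN sp by (intro mult_left_mono) auto
  moreover have "2 * r * (E / sqrt (2 * pi * h)) = (2 * r / sqrt (2 * pi * h)) * E" by simp
  moreover have "(2 * \<eta> * E0 / (3 * dd * sqrt (2 * pi * \<delta>))) / sqrt N = (K0 / sqrt N) * E0"
    unfolding K0_def by simp
  ultimately show ?thesis unfolding E_def[symmetric] E0_def[symmetric] h_def[symmetric] r_def[symmetric]
    using e1 by simp
qed

lemma cube_loss_le_gain:
  fixes N c1 C2 :: real
  assumes N: "N \<ge> 1" and c1: "c1 > 0" and C2: "C2 \<ge> 0" and NC: "N \<ge> C2" and NC1: "N \<ge> C2 / c1^3"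
  shows "C2 / N^3 \<le> (min 1 (c1 / sqrt N))^3"
proof (cases "c1 / sqrt N \<ge> 1")
  case True
  then have m: "min 1 (c1 / sqrt N) = 1" by simp
  have "1 \<le> N^2" using N by (simp add: one_le_power)
  then have "N * 1 \<le> N * N^2" using N by (intro mult_left_mono) auto
  moreover have "N * N^2 = N^3" by (simp add: power3_eq_cube power2_eq_square)
  ultimately have "C2 \<le> N^3" using NC by linarith
  then show ?thesis unfolding m using N by (simp add: divide_le_eq)
next
  case False
  then have m: "min 1 (c1 / sqrt N) = c1 / sqrt N" by simp
  have s1: "1 \<le> sqrt N" using N by simp
  have sN: "sqrt N > 0" using s1 by simp
  have NN: "sqrt N * sqrt N = N" using N by simp
  have sN2: "sqrt N \<le> N"
  proof -
    have "sqrt N * 1 \<le> sqrt N * sqrt N" using s1 sN by (intro mult_left_mono) auto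
    then show ?thesis using NN by simp
  qed
  have c13: "c1^3 > 0" using c1 by simp
  have a: "C2 \<le> c1^3 * N" using NC1 c13 by (simp add: divide_le_eq mult.commute)
  have "C2 * sqrt N \<le> c1^3 * N * sqrt N" using a sN by (intro mult_right_mono) auto
  also have "\<dots> \<le> c1^3 * N * N" using sN2 c13 N by (intro mult_left_mono) auto
  finally have b: "C2 * sqrt N \<le> c1^3 * N * N" .
  have N3: "N^3 = (N * sqrt N) * sqrt N * sqrt N * sqrt N"
    using NN by (simp add: power3_eq_cube mult.assoc)
  have p3: "(c1 / sqrt N)^3 = c1^3 / (sqrt N * sqrt N * sqrt N)"
    by (simp add: power_divide power3_eq_cube)
  have "C2 / N^3 = (C2 * sqrt N) / (N * N * N * sqrt N)" using sN N by (simp add: power3_eq_cube)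
  also have "\<dots> \<le> (c1^3 * N * N) / (N * N * N * sqrt N)" using b sN N by (intro divide_right_mono) auto
  also have "\<dots> = c1^3 / (N * sqrt N)" using sN N by simp
  also have "\<dots> = c1^3 / (sqrt N * sqrt N * sqrt N)" using NN by (simp add: mult.assoc)
  finally show ?thesis unfolding m p3 .
qed


lemma lipschitz_block_increment_le:
  fixes \<phi> :: "real \<Rightarrow> real ^ 'd"
  assumes Lip: "L-lipschitz_on {0..\<delta>} \<phi>" and d: "\<delta> > 0" and mK: "m \<le> K" and j: "j < 2^m"
  shows "\<bar>(\<phi> (dyadic_point \<delta> K ((j+1)*2^(K-m))) - \<phi> (dyadic_point \<delta> K (j*2^(K-m)))) $ i\<bar> \<le> L * (\<delta> / 2^m)"
proof -
  have two_nat: "(2::nat)^m * 2^(K-m) = 2^K" and two: "(2::real)^K = 2^(K-m) * 2^m"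
    using mK by (simp_all add: power_add[symmetric])
  have "(j+1) * 2^(K-m) \<le> (2::nat)^m * 2^(K-m)" using j by (intro mult_right_mono) auto
  then have j1: "(j+1) * 2^(K-m) \<le> (2::nat)^K" unfolding two_nat .
  then have j0: "j * 2^(K-m) \<le> (2::nat)^K" by (meson le_add1 mult_le_mono1 order_trans)
  have p1: "dyadic_point \<delta> K ((j+1)*2^(K-m)) \<in> {0..\<delta>}"
    by (rule dyadic_point_in_interval[OF _ j1]) (use d in simp)
  have p0: "dyadic_point \<delta> K (j*2^(K-m)) \<in> {0..\<delta>}"
    by (rule dyadic_point_in_interval[OF _ j0]) (use d in simp)
  have "\<bar>(\<phi> (dyadic_point \<delta> K ((j+1)*2^(K-m))) - \<phi> (dyadic_point \<delta> K (j*2^(K-m)))) $ i\<bar>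
      \<le> norm (\<phi> (dyadic_point \<delta> K ((j+1)*2^(K-m))) - \<phi> (dyadic_point \<delta> K (j*2^(K-m))))"
    by (rule component_le_norm_cart)
  also have "\<dots> \<le> L * \<bar>dyadic_point \<delta> K ((j+1)*2^(K-m)) - dyadic_point \<delta> K (j*2^(K-m))\<bar>"
    using lipschitz_onD[OF Lip p1 p0] by (simp add: dist_norm dist_real_def)
  also have "\<bar>dyadic_point \<delta> K ((j+1)*2^(K-m)) - dyadic_point \<delta> K (j*2^(K-m))\<bar> = \<delta> / 2^m"
    using two d by (simp add: field_simps)
  finally show ?thesis .
qed

lemma block_event_prob_ge_cube_half:
  fixes B :: "real \<Rightarrow> 'w \<Rightarrow> real ^ 'd" and v :: "real ^ 'd"
  assumes bm: "std_brownian_motion M B" and d: "\<delta> > 0" and mK: "m \<le> K"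
    and r: "r > 0" and A: "A > 0" and card: "CARD('d) \<le> 3"
    and v: "\<And>i. \<bar>v $ i\<bar> \<le> V" and y: "0 < y" "y \<le> 1"
    and gain: "y \<le> 2 * r * (exp (- (V + r)\<^sup>2 / (2 * (\<delta> / 2^m))) / sqrt (2 * pi * (\<delta> / 2^m)))"
    and loss: "15 * real CARD('d)^7 * (\<delta> / 2^m)^3 / A^6 \<le> y^3 / 2"
  shows "y^3 / 2 \<le> measure M (block_event M B \<delta> K m r (\<lambda>l. A * (9/10)^l) v j)"
proof -
  let ?g = "2 * r * (exp (- (V + r)\<^sup>2 / (2 * (\<delta> / 2^m))) / sqrt (2 * pi * (\<delta> / 2^m)))"
  have "y^3 \<le> y ^ CARD('d)" using card y by (intro power_decreasing) auto
  also have "\<dots> \<le> ?g ^ CARD('d)" using gain y by (intro power_mono) auto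
  finally have "y^3 \<le> ?g ^ CARD('d)" .
  moreover have "(\<Sum>l=1..K-m. 2^l * (15 * real CARD('d)^7 * ((\<delta> / 2^m) / 2^l)^3 / (A * (9/10)^l)^6))
      \<le> 15 * real CARD('d)^7 * (\<delta> / 2^m)^3 / A^6"
    by (rule sixth_moment_chain_sum_le) (use d A in auto)
  moreover have "?g ^ CARD('d) - (\<Sum>l=1..K-m. 2^l * (15 * real CARD('d)^7 * ((\<delta> / 2^m) / 2^l)^3 / (A * (9/10)^l)^6))
      \<le> measure M (block_event M B \<delta> K m r (\<lambda>l. A * (9/10)^l) v j)"
    by (rule block_event_prob_ge[where e="\<lambda>l. A * (9/10)^l", OF bm d mK r _ v]) (use A in simp)
  ultimately show ?thesis using loss by linarith
qed

lemma block_events_subset_dyadic_tube: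
  fixes B :: "real \<Rightarrow> 'w \<Rightarrow> real ^ 'd" and \<phi> :: "real \<Rightarrow> real ^ 'd"
  assumes bm: "std_brownian_motion M B" and \<phi>0: "\<phi> 0 = 0" and d: "\<delta> > 0" and mK: "m \<le> K"
    and Lip: "L-lipschitz_on {0..\<delta>} \<phi>" and r: "r \<ge> 0" and e: "\<And>l. e l \<ge> 0"
    and par: "2^m * real CARD('d) * r + (\<Sum>l=1..K-m. e l) + L * (\<delta> / 2^m) \<le> \<eta>"
  shows "(\<Inter>j\<in>{..<2^m}. block_event M B \<delta> K m r e
            (\<phi> (dyadic_point \<delta> K ((j+1)*2^(K-m))) - \<phi> (dyadic_point \<delta> K (j*2^(K-m)))) j)
    \<subseteq> {\<omega>\<in>space M. \<forall>k\<le>2^K. norm (B (dyadic_point \<delta> K k) \<omega> - \<phi> (dyadic_point \<delta> K k)) \<le> \<eta>}"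
    (is "(\<Inter>j\<in>{..<2^m}. ?H j) \<subseteq> _")
proof
  fix \<omega> assume \<omega>: "\<omega> \<in> (\<Inter>j\<in>{..<2^m}. ?H j)"
  then have "\<omega> \<in> ?H 0" by (meson INT_iff lessThan_iff zero_less_numeral zero_less_power)
  then have \<omega>_space: "\<omega> \<in> space M" unfolding block_event_def by blast
  have "\<forall>k\<le>2^K. norm ((\<lambda>s. B s \<omega>) (dyadic_point \<delta> K k) - \<phi> (dyadic_point \<delta> K k)) \<le> \<eta>"
  proof (rule dyadic_tracking_from_blocks[OF _ \<phi>0 d mK Lip r e _ _ par])
    show "B 0 \<omega> = 0" using std_brownian_motionD(3)[OF bm \<omega>_space] .
    show "\<forall>j<2^m. \<forall>i. \<bar>(B (dyadic_point \<delta> K ((j+1)*2^(K-m))) \<omega> - B (dyadic_point \<delta> K (j*2^(K-m))) \<omega>) $ i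
        - (\<phi> (dyadic_point \<delta> K ((j+1)*2^(K-m))) - \<phi> (dyadic_point \<delta> K (j*2^(K-m)))) $ i\<bar> \<le> r"
      using \<omega> unfolding block_event_def by auto
    show "\<forall>j<2^m. \<forall>l\<in>{1..K-m}. \<forall>i<2^l.
        norm (B (dyadic_point \<delta> K (j*2^(K-m) + (i+1)*2^(K-m-l))) \<omega>
          - B (dyadic_point \<delta> K (j*2^(K-m) + i*2^(K-m-l))) \<omega>) \<le> e l"
      using \<omega> unfolding block_event_def by auto
  qed
  then show "\<omega> \<in> {\<omega>\<in>space M. \<forall>k\<le>2^K. norm (B (dyadic_point \<delta> K k) \<omega> - \<phi> (dyadic_point \<delta> K k)) \<le> \<eta>}"
    using \<omega>_space by simp
qed

lemma block_parameters_exist: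
  fixes \<delta> \<eta> L :: real
  assumes d: "\<delta> > 0" and e: "\<eta> > 0" and L: "L \<ge> 0"
  obtains m y r where "0 < y" and "y \<le> 1" and "0 < r"
    and "y \<le> 2 * r * (exp (- (L * (\<delta> / 2^m) + r)\<^sup>2 / (2 * (\<delta> / 2^m))) / sqrt (2 * pi * (\<delta> / 2^m)))"
    and "15 * real CARD('d::finite)^7 * (\<delta> / 2^m)^3 / (\<eta> / 27)^6 \<le> y^3 / 2"
    and "\<And>K. 2^m * real CARD('d) * r + (\<Sum>l=1..K-m. \<eta> / 27 * (9/10)^l) + L * (\<delta> / 2^m) \<le> \<eta>"
proof -
  define dd where "dd = real CARD('d)"
  have dd0: "dd > 0" unfolding dd_def by simp
  define A where "A = \<eta> / 27"
  have A0: "A > 0" unfolding A_def using e by simp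
  define C2 where "C2 = 30 * dd^7 * \<delta>^3 / A^6"
  have C20: "C2 \<ge> 0" unfolding C2_def using d A0 dd0 by simp
  define c1 where "c1 = 2 * \<eta> * exp (- (L\<^sup>2 * \<delta> + \<eta>\<^sup>2 / (9 * dd\<^sup>2 * \<delta>))) / (3 * dd * sqrt (2 * pi * \<delta>))"
  have c1p: "c1 > 0" unfolding c1_def using e dd0 d by simp
  text \<open>\<open>2^m\<close> blocks: enough for an \<open>L\<close>-Lipschitz path to move by at most \<open>\<eta>/3\<close> over a
    block, and for the chaining loss \<open>C2/2^(3m)\<close> to be dominated by the Gaussian gain
    \<open>(c1/2^(m/2))^3\<close>.\<close>
  obtain m where m: "max (max 1 (3*L*\<delta>/\<eta>)) (max C2 (C2 / c1^3)) < 2^m"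
    using real_arch_pow[of 2 "max (max 1 (3*L*\<delta>/\<eta>)) (max C2 (C2 / c1^3))"] by auto
  define N where "N = (2::real)^m"
  have N1: "N \<ge> 1" and NL: "N \<ge> 3*L*\<delta>/\<eta>" and NC: "N \<ge> C2" and NC1: "N \<ge> C2 / c1^3"
    using m unfolding N_def by auto
  define y where "y = min 1 (c1 / sqrt N)"
  have y0: "0 < y" unfolding y_def using c1p N1 by simp
  have y1: "y \<le> 1" unfolding y_def by simp
  define r where "r = \<eta> / (3 * dd * N)"
  have r0: "r > 0" unfolding r_def using e dd0 N1 by simp
  have "y \<le> c1 / sqrt N" unfolding y_def by simp
  also have "\<dots> \<le> 2 * r * (exp (- (L * (\<delta> / N) + r)\<^sup>2 / (2 * (\<delta> / N))) / sqrt (2 * pi * (\<delta> / N)))"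
    unfolding r_def c1_def by (rule gaussian_block_factor_ge[OF N1 d e dd0 L])
  finally have gain: "y \<le> 2 * r * (exp (- (L * (\<delta> / 2^m) + r)\<^sup>2 / (2 * (\<delta> / 2^m))) / sqrt (2 * pi * (\<delta> / 2^m)))"
    unfolding N_def .
  have "15 * real CARD('d)^7 * (\<delta> / 2^m)^3 / A^6 = (C2 / N^3) / 2"
    unfolding C2_def N_def dd_def using A0 by (simp add: field_simps power_divide)
  also have "\<dots> \<le> y^3 / 2"
    using cube_loss_le_gain[OF N1 c1p C20 NC NC1] unfolding y_def by simp
  finally have loss: "15 * real CARD('d)^7 * (\<delta> / 2^m)^3 / A^6 \<le> y^3 / 2" .
  have par: "2^m * real CARD('d) * r + (\<Sum>l=1..K-m. A * (9/10)^l) + L * (\<delta> / 2^m) \<le> \<eta>" for K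
  proof -
    have "(\<Sum>l=1..K-m. A * (9/10)^l) = A * (\<Sum>l=1..K-m. (9/10)^l)" by (simp add: sum_distrib_left)
    also have "\<dots> = A * (9 - 9 * (9/10)^(K-m))" by (simp only: sum_power_nine_tenths)
    also have "\<dots> \<le> A * 9" using A0 by (intro mult_left_mono) auto
    finally have "(\<Sum>l=1..K-m. A * (9/10)^l) \<le> \<eta> / 3" unfolding A_def by simp
    moreover have "2^m * real CARD('d) * r = \<eta> / 3" unfolding r_def N_def dd_def by simp
    moreover have "L * (\<delta> / 2^m) \<le> \<eta> / 3"
    proof -
      have "L * (\<delta> / 2^m) = L * \<delta> / N" unfolding N_def by simp
      also have "\<dots> \<le> \<eta> / 3" using NL N1 e by (simp add: divide_le_eq field_simps)
      finally show ?thesis .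
    qed
    ultimately show ?thesis by linarith
  qed
  show ?thesis by (rule that[OF y0 y1 r0 gain loss[unfolded A_def] par[unfolded A_def]])
qed

lemma brownian_dyadic_tube_prob_ge:
  fixes \<delta> \<eta> L :: real
  assumes d: "\<delta> > 0" and e: "\<eta> > 0" and L: "L \<ge> 0" and card: "CARD('d) \<le> 3"
  obtains c m where "c > 0"
    and "\<And>(M::'w measure) (B::real \<Rightarrow> 'w \<Rightarrow> real ^ 'd) \<phi> K.
      std_brownian_motion M B \<Longrightarrow> \<phi> 0 = 0 \<Longrightarrow> L-lipschitz_on {0..\<delta>} \<phi> \<Longrightarrow> m \<le> K \<Longrightarrow>
      c \<le> measure M {\<omega>\<in>space M. \<forall>k\<le>2^K. norm (B (dyadic_point \<delta> K k) \<omega> - \<phi> (dyadic_point \<delta> K k)) \<le> \<eta>}"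
proof -
  obtain m y r where y: "0 < y" "y \<le> 1" and r0: "0 < r"
    and gain: "y \<le> 2 * r * (exp (- (L * (\<delta> / 2^m) + r)\<^sup>2 / (2 * (\<delta> / 2^m))) / sqrt (2 * pi * (\<delta> / 2^m)))"
    and loss: "15 * real CARD('d)^7 * (\<delta> / 2^m)^3 / (\<eta> / 27)^6 \<le> y^3 / 2"
    and par: "\<And>K. 2^m * real CARD('d) * r + (\<Sum>l=1..K-m. \<eta> / 27 * (9/10)^l) + L * (\<delta> / 2^m) \<le> \<eta>"
    by (rule block_parameters_exist[OF d e L], rule that)
  have A0: "\<eta> / 27 > 0" using e by simp
  show ?thesis
  proof (rule that[of "(y^3/2)^(2^m)" m])
    show "(y^3/2)^(2^m) > 0" using y by simp
  next
    fix M :: "'w measure" and B :: "real \<Rightarrow> 'w \<Rightarrow> real ^ 'd" and \<phi> :: "real \<Rightarrow> real ^ 'd" and K :: nat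
    assume bm: "std_brownian_motion M B" and \<phi>0: "\<phi> 0 = 0"
      and Lip: "L-lipschitz_on {0..\<delta>} \<phi>" and mK: "m \<le> K"
    interpret prob_space M by (rule std_brownian_motionD(1)[OF bm])
    have [measurable]: "\<And>t. B t \<in> borel_measurable M" by (rule std_brownian_motionD(2)[OF bm])
    let ?v = "\<lambda>j. \<phi> (dyadic_point \<delta> K ((j+1)*2^(K-m))) - \<phi> (dyadic_point \<delta> K (j*2^(K-m)))"
    let ?H = "\<lambda>j. block_event M B \<delta> K m r (\<lambda>l. \<eta> / 27 * (9/10)^l) (?v j) j"
    have H_ge: "y^3/2 \<le> measure M (?H j)" if "j < 2^m" for j
      using block_event_prob_ge_cube_half[OF bm d mK r0 A0 card
          lipschitz_block_increment_le[OF Lip d mK that] y gain loss] .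
    have "(y^3/2)^(2^m) = (\<Prod>j\<in>{..<(2::nat)^m}. y^3/2)" by simp
    also have "\<dots> \<le> (\<Prod>j\<in>{..<2^m}. measure M (?H j))"
      by (intro prod_mono conjI) (use H_ge y in auto)
    also have "\<dots> = measure M (\<Inter>j\<in>{..<2^m}. ?H j)"
      by (rule block_events_indep[OF bm d mK, symmetric])
    also have "\<dots> \<le> measure M {\<omega>\<in>space M. \<forall>k\<le>2^K. norm (B (dyadic_point \<delta> K k) \<omega> - \<phi> (dyadic_point \<delta> K k)) \<le> \<eta>}"
    proof (rule finite_measure_mono)
      show "(\<Inter>j\<in>{..<2^m}. ?H j) \<subseteq> {\<omega>\<in>space M. \<forall>k\<le>2^K. norm (B (dyadic_point \<delta> K k) \<omega> - \<phi> (dyadic_point \<delta> K k)) \<le> \<eta>}"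
        by (rule block_events_subset_dyadic_tube[OF bm \<phi>0 d mK Lip _ _ par]) (use A0 r0 in auto)
      show "{\<omega>\<in>space M. \<forall>k\<le>2^K. norm (B (dyadic_point \<delta> K k) \<omega> - \<phi> (dyadic_point \<delta> K k)) \<le> \<eta>} \<in> sets M"
        by measurable
    qed
    finally show "(y^3/2)^(2^m) \<le> measure M {\<omega>\<in>space M. \<forall>k\<le>2^K. norm (B (dyadic_point \<delta> K k) \<omega> - \<phi> (dyadic_point \<delta> K k)) \<le> \<eta>}" .
  qed
qed


lemma brownian_tube_prob_ge_dyadic:
  fixes B :: "real \<Rightarrow> 'w \<Rightarrow> real ^ 'd" and \<phi> :: "real \<Rightarrow> real ^ 'd"
  assumes bm: "std_brownian_motion M B" and \<phi>: "continuous_on {0..\<delta>} \<phi>" and d: "\<delta> > 0"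
    and lb: "\<And>K. m \<le> K \<Longrightarrow>
      c \<le> measure M {\<omega>\<in>space M. \<forall>k\<le>2^K. norm (B (dyadic_point \<delta> K k) \<omega> - \<phi> (dyadic_point \<delta> K k)) \<le> \<eta>}"
  shows "c \<le> measure M {\<omega>\<in>space M. \<forall>s\<in>{0..\<delta>}. norm (B s \<omega> - \<phi> s) \<le> \<eta>}"
proof -
  have [measurable]: "\<And>t. B t \<in> borel_measurable M" by (rule std_brownian_motionD(2)[OF bm])
  have "c \<le> measure M {\<omega>\<in>space M. \<forall>s\<in>{0..\<delta>}. B s \<omega> - \<phi> s \<in> cball 0 \<eta>}"
  proof (rule measure_path_in_closed_ge[where X="\<lambda>s \<omega>. B s \<omega> - \<phi> s" and m=m])
    show "prob_space M" by (rule std_brownian_motionD(1)[OF bm])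
    show "(\<lambda>\<omega>. B t \<omega> - \<phi> t) \<in> borel_measurable M" for t by measurable
    show "continuous_on {0..\<delta>} (\<lambda>s. B s \<omega> - \<phi> s)" if "\<omega> \<in> space M" for \<omega>
    proof -
      have "continuous_on {0..\<delta>} (\<lambda>s. B s \<omega>)"
        using std_brownian_motionD(4)[OF bm that] by (rule continuous_on_subset) auto
      then show ?thesis using \<phi> by (auto intro!: continuous_intros)
    qed
    show "c \<le> measure M {\<omega>\<in>space M. \<forall>k\<le>2^K. B (dyadic_point \<delta> K k) \<omega> - \<phi> (dyadic_point \<delta> K k) \<in> cball 0 \<eta>}"
      if "m \<le> K" for K
      using lb[OF that] by simp
  qed (use d in auto)
  then show ?thesis by simp
qed

lemma sets_bridge_in_annulus:
  fixes B :: "real \<Rightarrow> 'w \<Rightarrow> real ^ 'd"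
  assumes bm: "std_brownian_motion M B" and d: "\<delta> > 0"
  shows "{\<omega>\<in>space M. \<forall>s\<in>{0..\<delta>}. brownian_bridge \<delta> a0 a1 B s \<omega> \<in> annulusR R \<epsilon>} \<in> sets M"
proof (rule sets_path_in_open)
  have [measurable]: "\<And>t. B t \<in> borel_measurable M" by (rule std_brownian_motionD(2)[OF bm])
  show "(\<lambda>\<omega>. brownian_bridge \<delta> a0 a1 B t \<omega>) \<in> borel_measurable M" for t
    unfolding brownian_bridge_def by measurable
  show "continuous_on {0..\<delta>} (\<lambda>s. brownian_bridge \<delta> a0 a1 B s \<omega>)" if "\<omega> \<in> space M" for \<omega>
  proof -
    have "continuous_on {0..\<delta>} (\<lambda>s. B s \<omega>)"
      using std_brownian_motionD(4)[OF bm that] by (rule continuous_on_subset) auto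
    then show ?thesis unfolding brownian_bridge_def using d by (intro continuous_intros) auto
  qed
  show "open (annulusR R \<epsilon> :: (real ^ 'd) set)"
    unfolding annulusR_def annulus_def by (intro open_Collect_conj open_Collect_less continuous_intros)
qed (rule d)

theorem lemma6p4:
  fixes R \<epsilon> \<epsilon>b \<delta> :: real
  assumes "CARD('d) = 2 \<or> CARD('d) = 3"
    and "R > 0" and "0 < \<epsilon>b" and "\<epsilon>b < \<epsilon>" and "\<epsilon> < R" and "\<delta> > 0"
  shows "\<exists>c>0. \<forall>(a0::real ^ 'd) (a1::real ^ 'd).
           a0 \<in> annulusR R \<epsilon>b \<and> a1 \<in> annulusR R \<epsilon>b \<longrightarrow>
           (\<forall>(M::'w measure) B. std_brownian_motion M B \<longrightarrow> Phi M B R \<epsilon> \<delta> a0 a1 \<ge> c)"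
proof -
  define \<eta> where "\<eta> = (\<epsilon> - \<epsilon>b) / 2"
  define L where "L = (2*\<epsilon>b + 10*(R+\<epsilon>b)) / \<delta>"
  have \<eta>: "\<eta> > 0" and L: "L \<ge> 0" and card: "CARD('d) \<le> 3" and dim: "2 \<le> DIM(real ^ 'd)"
    using assms unfolding \<eta>_def L_def by auto
  obtain c m where "c > 0" and tube: "\<And>(M::'w measure) (B::real \<Rightarrow> 'w \<Rightarrow> real ^ 'd) \<phi> K.
      std_brownian_motion M B \<Longrightarrow> \<phi> 0 = 0 \<Longrightarrow> L-lipschitz_on {0..\<delta>} \<phi> \<Longrightarrow> m \<le> K \<Longrightarrow>
      c \<le> measure M {\<omega>\<in>space M. \<forall>k\<le>2^K. norm (B (dyadic_point \<delta> K k) \<omega> - \<phi> (dyadic_point \<delta> K k)) \<le> \<eta>}"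
    by (rule brownian_dyadic_tube_prob_ge[OF \<open>\<delta> > 0\<close> \<eta> L card], rule that)
  show ?thesis
  proof (intro exI[of _ c] conjI \<open>c > 0\<close> allI impI)
    fix a0 a1 :: "real ^ 'd" and M :: "'w measure" and B :: "real \<Rightarrow> 'w \<Rightarrow> real ^ 'd"
    assume a: "a0 \<in> annulusR R \<epsilon>b \<and> a1 \<in> annulusR R \<epsilon>b" and bm: "std_brownian_motion M B"
    obtain \<phi> where \<phi>0: "\<phi> 0 = 0" and Lip: "L-lipschitz_on {0..\<delta>} \<phi>"
      and near: "\<And>x s. \<forall>t\<in>{0..\<delta>}. norm (x t - \<phi> t) \<le> \<eta> \<Longrightarrow> s \<in> {0..\<delta>} \<Longrightarrow>
         a0 + (s / \<delta>) *\<^sub>R (a1 - a0) + x s - (s / \<delta>) *\<^sub>R x \<delta> \<in> annulusR R \<epsilon>"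
      using bridge_in_annulus_near_path[OF dim \<open>\<delta> > 0\<close> assms(3-5) conjunct1[OF a] conjunct2[OF a]]
      unfolding \<eta>_def L_def by blast
    have sub: "{\<omega>\<in>space M. \<forall>s\<in>{0..\<delta>}. norm (B s \<omega> - \<phi> s) \<le> \<eta>}
        \<subseteq> {\<omega>\<in>space M. \<forall>s\<in>{0..\<delta>}. brownian_bridge \<delta> a0 a1 B s \<omega> \<in> annulusR R \<epsilon>}"
    proof
      fix \<omega> assume "\<omega> \<in> {\<omega>\<in>space M. \<forall>s\<in>{0..\<delta>}. norm (B s \<omega> - \<phi> s) \<le> \<eta>}"
      then have "\<omega> \<in> space M" and close: "\<forall>t\<in>{0..\<delta>}. norm (B t \<omega> - \<phi> t) \<le> \<eta>" by auto
      moreover have "brownian_bridge \<delta> a0 a1 B s \<omega> \<in> annulusR R \<epsilon>" if "s \<in> {0..\<delta>}" for s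
        using near[OF close that] unfolding brownian_bridge_def .
      ultimately show "\<omega> \<in> {\<omega>\<in>space M. \<forall>s\<in>{0..\<delta>}. brownian_bridge \<delta> a0 a1 B s \<omega> \<in> annulusR R \<epsilon>}"
        by blast
    qed
    interpret prob_space M by (rule std_brownian_motionD(1)[OF bm])
    have "c \<le> measure M {\<omega>\<in>space M. \<forall>s\<in>{0..\<delta>}. norm (B s \<omega> - \<phi> s) \<le> \<eta>}"
      using brownian_tube_prob_ge_dyadic[OF bm lipschitz_on_continuous_on[OF Lip] \<open>\<delta> > 0\<close> tube[OF bm \<phi>0 Lip]] .
    also have "\<dots> \<le> Phi M B R \<epsilon> \<delta> a0 a1"
      unfolding Phi_def by (rule finite_measure_mono[OF sub sets_bridge_in_annulus[OF bm \<open>\<delta> > 0\<close>]])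
    finally show "Phi M B R \<epsilon> \<delta> a0 a1 \<ge> c" .
  qed
qed

end
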